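(* Let $\eta$ be a weight of class $*$ and let $\{\psi_\lambda\}_{\lambda\in\Lambda}$ be a UCPU of class $*-\dagger$ with points $\{y_\lambda\}_{\lambda\in\Lambda}$. In the Beurling case, for every $h>0$, and in the Roumieu case, for some $h>0$, $$\sup_{\lambda,\mu\in\Lambda}e^{A(h|y_\lambda-y_\mu|)}\|\psi_\lambda\psi_\mu\|_{\mathcal FL^1_\eta}<\infty.$$
   Context: $\{M_p\}_{p\in\mathbb N}$, $\{A_p\}_{p\in\mathbb N}$ are sequences of positive numbers with $M_0=M_1=A_0=A_1=1$, both satisfying (M.1) $M_p^2\le M_{p-1}M_{p+1}$ ($p\ge1$), (M.2) $M_{p+q}\le c_0H^{p+q}M_pM_q$ for some $c_0,H\ge1$, (M.6) $p!\le c_0L_0^pM_p$ for some $c_0,L_0\ge1$; $\{A_p\}$ moreover satisfies (M.2)$^*$: $2m_p\le m_{pN}$ for $p\ge p_0$, some $p_0,N\in\mathbb Z_+$, $m_j=A_j/A_{j-1}$. $M_\alpha=M_{|\alpha|}$; associated functions $M(\rho)=\sup_p\ln(\rho^p/M_p)$, $A(\rho)=\sup_p\ln(\rho^p/A_p)$. $\mathcal S^{M_p,h}_{A_p,h}(\mathbb R^n)$ ($h>0$) is the Banach space of smooth $\varphi$ with $\sup_\alpha h^{|\alpha|}\|e^{A(h|\cdot|)}\partial^\alpha\varphi\|_{L^\infty}/M_\alpha<\infty$; $\mathcal S^*_\dagger(\mathbb R^n)$ denotes the Beurling space (projective limit as $h\to\infty$) or the Roumieu space (inductive limit as $h\to0^+$).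 A measurable $\eta:\mathbb R^n\to(0,\infty)$ is a weight of class $*$ if there are $C,\tau>0$ (Beurling; Roumieu: for every $\tau>0$ some $C>0$) with $\eta(x+y)\le C\eta(x)e^{M(\tau|y|)}$. $\mathcal FL^1_\eta=\{\mathcal Ff: \eta f\in L^1\}$ with $\|\mathcal Ff\|_{\mathcal FL^1_\eta}=\|\eta f\|_{L^1}$, where $\mathcal Ff(\xi)=\int e^{-2\pi ix\cdot\xi}f(x)dx$. A UCPU of class $*-\dagger$ is a family $\{\psi_\lambda\}_{\lambda\in\Lambda}\subseteq\mathcal S^*_\dagger(\mathbb R^n)$, $\Lambda$ countable, with points $\{y_\lambda\}\subseteq\mathbb R^n$ such that: (1) for every $h>0$ (Beurling; Roumieu: for some $h>0$) $\sup_{\lambda,\alpha,x} h^{|\alpha|}|\partial^\alpha\psi_\lambda(x)|e^{A(h|x-y_\lambda|)}/M_\alpha<\infty$; (2) for every compact $K$ there is $C_K$ with $\sup_x|\{\lambda: x\in y_\lambda+K\}|\le C_K$; (3) there is a bounded open neighbourhood $U$ of $0$ with $\mathbb R^n=\bigcup_\lambda(y_\lambda+U)$; (4) $\sum_\lambda\psi_\lambda=1$ on $\mathbb R^n$. *)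

theory Defs
  imports "HOL-Analysis.Analysis"
begin

text \<open>Beurling / Roumieu alternative, written * in the paper.\<close>
datatype ultra_case = Beurling | Roumieu

text \<open>Weight sequences: positivity, normalisation M0 = M1 = 1, (M.1), (M.2), (M.6).\<close>
definition weight_sequence :: "(nat \<Rightarrow> real) \<Rightarrow> bool" where
  "weight_sequence M \<longleftrightarrow>
     (\<forall>p. M p > 0) \<and> M 0 = 1 \<and> M 1 = 1 \<and>
     (\<forall>p\<ge>1. (M p)\<^sup>2 \<le> M (p - 1) * M (p + 1)) \<and>
     (\<exists>c0 H. c0 \<ge> 1 \<and> H \<ge> 1 \<and> (\<forall>p q. M (p + q) \<le> c0 * H ^ (p + q) * M p * M q)) \<and>
     (\<exists>c0 L0. c0 \<ge> 1 \<and> L0 \<ge> 1 \<and> (\<forall>p. fact p \<le> c0 * L0 ^ p * M p))"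

definition cond_M2_star :: "(nat \<Rightarrow> real) \<Rightarrow> bool" where
  "cond_M2_star A \<longleftrightarrow>
     (\<exists>p0 N::nat. p0 \<ge> 1 \<and> N \<ge> 1 \<and>
        (\<forall>p\<ge>p0. 2 * (A p / A (p - 1)) \<le> A (p * N) / A (p * N - 1)))"

definition assoc_fun :: "(nat \<Rightarrow> real) \<Rightarrow> real \<Rightarrow> real" where
  "assoc_fun M \<rho> = (SUP p. ln (\<rho> ^ p / M p))"

text \<open>Directional derivative along b, and iterated partial derivatives along a list
  of basis vectors (for smooth functions this gives all \<partial>^\<alpha>, |\<alpha>| = length of the list).\<close>
definition dir_deriv :: "'a::euclidean_space \<Rightarrow> ('a \<Rightarrow> complex) \<Rightarrow> 'a \<Rightarrow> complex" where
  "dir_deriv b f x = vector_derivative (\<lambda>t::real. f (x + t *\<^sub>R b)) (at 0)"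

fun iter_deriv :: "'a::euclidean_space list \<Rightarrow> ('a \<Rightarrow> complex) \<Rightarrow> 'a \<Rightarrow> complex" where
  "iter_deriv [] f = f"
| "iter_deriv (b # bs) f = dir_deriv b (iter_deriv bs f)"

definition smooth_fun :: "('a::euclidean_space \<Rightarrow> complex) \<Rightarrow> bool" where
  "smooth_fun f \<longleftrightarrow> (\<forall>bs. set bs \<subseteq> Basis \<longrightarrow> (\<forall>x. iter_deriv bs f differentiable at x))"

definition S_bounded :: "(nat \<Rightarrow> real) \<Rightarrow> (nat \<Rightarrow> real) \<Rightarrow> real \<Rightarrow> ('a::euclidean_space \<Rightarrow> complex) \<Rightarrow> bool" where
  "S_bounded M A h \<phi> \<longleftrightarrow>
     (\<exists>C. \<forall>bs x. set bs \<subseteq> Basis \<longrightarrow>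
        h ^ length bs * norm (iter_deriv bs \<phi> x) * exp (assoc_fun A (h * norm x)) / M (length bs) \<le> C)"

definition in_S :: "ultra_case \<Rightarrow> (nat \<Rightarrow> real) \<Rightarrow> (nat \<Rightarrow> real) \<Rightarrow> ('a::euclidean_space \<Rightarrow> complex) \<Rightarrow> bool" where
  "in_S c M A \<phi> \<longleftrightarrow> smooth_fun \<phi> \<and>
     (case c of Beurling \<Rightarrow> (\<forall>h>0. S_bounded M A h \<phi>)
              | Roumieu \<Rightarrow> (\<exists>h>0. S_bounded M A h \<phi>))"

definition weight_of_class :: "ultra_case \<Rightarrow> (nat \<Rightarrow> real) \<Rightarrow> ('a::euclidean_space \<Rightarrow> real) \<Rightarrow> bool" where
  "weight_of_class c M \<eta> \<longleftrightarrow> \<eta> \<in> borel_measurable lborel \<and> (\<forall>x. \<eta> x > 0) \<and>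
     (case c of
        Beurling \<Rightarrow> (\<exists>C \<tau>. C > 0 \<and> \<tau> > 0 \<and> (\<forall>x y. \<eta> (x + y) \<le> C * \<eta> x * exp (assoc_fun M (\<tau> * norm y))))
      | Roumieu \<Rightarrow> (\<forall>\<tau>>0. \<exists>C>0. \<forall>x y. \<eta> (x + y) \<le> C * \<eta> x * exp (assoc_fun M (\<tau> * norm y))))"

text \<open>Inverse Fourier transform (convention F f(xi) = \<integral> e^{-2 pi i x.xi} f(x) dx).\<close>
definition inv_fourier :: "('a::euclidean_space \<Rightarrow> complex) \<Rightarrow> 'a \<Rightarrow> complex" where
  "inv_fourier g x = (\<integral>\<xi>. cis (2 * pi * (x \<bullet> \<xi>)) * g \<xi> \<partial>lborel)"

text \<open>Norm in FL^1_\<eta> of g = F f, i.e. \<parallel>\<eta> f\<parallel>_{L^1} with f = F^{-1} g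
  (used only for g integrable with integrable Fourier inverse, e.g. g in S^*_\<dagger>);
  value \<infinity> means g \<notin> FL^1_\<eta>.\<close>
definition FL1_norm :: "('a::euclidean_space \<Rightarrow> real) \<Rightarrow> ('a \<Rightarrow> complex) \<Rightarrow> ennreal" where
  "FL1_norm \<eta> g = (\<integral>\<^sup>+ x. ennreal (\<eta> x * norm (inv_fourier g x)) \<partial>lborel)"

text \<open>Uniform class-*-\<dagger> partition of unity (UCPU), index set = the countable type 'i.\<close>
definition UCPU :: "ultra_case \<Rightarrow> (nat \<Rightarrow> real) \<Rightarrow> (nat \<Rightarrow> real) \<Rightarrow>
    ('i::countable \<Rightarrow> 'a::euclidean_space \<Rightarrow> complex) \<Rightarrow> ('i \<Rightarrow> 'a) \<Rightarrow> bool" where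
  "UCPU c M A \<psi> y \<longleftrightarrow>
     (\<forall>l. in_S c M A (\<psi> l)) \<and>
     (let bnd = (\<lambda>h. \<exists>C. \<forall>l bs x. set bs \<subseteq> Basis \<longrightarrow>
           h ^ length bs * norm (iter_deriv bs (\<psi> l) x) * exp (assoc_fun A (h * norm (x - y l)))
             / M (length bs) \<le> C)
      in case c of Beurling \<Rightarrow> (\<forall>h>0. bnd h) | Roumieu \<Rightarrow> (\<exists>h>0. bnd h)) \<and>
     (\<forall>K. compact K \<longrightarrow> (\<exists>CK::nat. \<forall>x. finite {l. x \<in> (+) (y l) ` K} \<and> card {l. x \<in> (+) (y l) ` K} \<le> CK)) \<and>
     (\<exists>U. open U \<and> bounded U \<and> 0 \<in> U \<and> (\<Union>l. (+) (y l) ` U) = UNIV) \<and>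
     (\<forall>x. ((\<lambda>l. \<psi> l x) has_sum 1) UNIV)"

end

theory Submission
  imports Defs
begin

(* Write phi = psi_l psi_m, d = |y_l - y_m|, E_A = exp o A and E_M = exp o M. By the Leibniz rule
   and log-convexity (M_i M_(k-i) <= M_k), the k-th derivative of phi in a coordinate direction is
   at most C^2 (2/h')^k M_k / (E_A(h' |xi - y_l|) E_A(h' |xi - y_m|)). If h' >= 2 H h, then (M.2)
   for A bounds this denominator from below by E_A(h d) E_A(2 h |xi - y_l|), and the second factor
   dominates (1 + |xi - y_l|)^(2n), which is integrable. Under the inverse Fourier transform a
   derivative in direction b becomes multiplication by -2 pi i x.b, so choosing b with
   |x| <= n |x.b| gives the moment bounds (rho |x|)^k |F^-1 phi(x)| <= K M_k / E_A(h d) for all k,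
   where rho = pi h' / n. If tau H n <= pi h', then (M.2) for M turns them into
   E_M(tau |x|) (1 + |x|)^(2n) |F^-1 phi(x)| <= K' / E_A(h d); this absorbs the weight
   eta(x) <= C eta(0) E_M(tau |x|) and leaves an integrable function of x. In the Beurling case
   h' is chosen from h and tau, in the Roumieu case h and tau from h'. *)

section \<open>The associated function of a weight sequence\<close>

lemma weight_sequence_pos: "weight_sequence M \<Longrightarrow> 0 < M p"
  unfolding weight_sequence_def by auto

lemma weight_sequence_0: "weight_sequence M \<Longrightarrow> M 0 = 1"
  unfolding weight_sequence_def by auto

lemma weight_sequence_M2:
  assumes "weight_sequence M"
  obtains c0 H where "c0 \<ge> 1" "H \<ge> 1" "\<And>p q. M (p + q) \<le> c0 * H ^ (p + q) * M p * M q"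
  using assms unfolding weight_sequence_def by auto

lemma weight_sequence_ratio_mono:
  assumes M: "weight_sequence M" and "p \<le> q"
  shows "M (Suc p) / M p \<le> M (Suc q) / M q"
  using assms(2)
proof (induction q rule: dec_induct)
  case (step q)
  have "(M (Suc q))\<^sup>2 \<le> M q * M (Suc (Suc q))"
    using M unfolding weight_sequence_def by (metis Suc_eq_plus1 diff_Suc_1 le_add2)
  then have "M (Suc q) / M q \<le> M (Suc (Suc q)) / M (Suc q)"
    using weight_sequence_pos[OF M, of q] weight_sequence_pos[OF M, of "Suc q"]
    by (simp add: divide_simps power2_eq_square mult.commute)
  with step.IH show ?case by linarith
qed simp

lemma weight_sequence_mult_le:
  assumes M: "weight_sequence M"
  shows "M i * M j \<le> M (i + j)"
proof (induction j)
  case 0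
  then show ?case using weight_sequence_0[OF M] by simp
next
  case (Suc j)
  have pos: "\<And>p. 0 < M p" using weight_sequence_pos[OF M] .
  have "M i * M (Suc j) = M i * M j * (M (Suc j) / M j)" using pos[of j] by simp
  also have "\<dots> \<le> M (i + j) * (M (Suc (i + j)) / M (i + j))"
    using Suc.IH weight_sequence_ratio_mono[OF M, of j "i + j"] pos
    by (intro mult_mono) (auto intro: less_imp_le)
  also have "\<dots> = M (i + Suc j)" using pos[of "i + j"] by simp
  finally show ?case .
qed

lemma pow_div_fact_le_exp:
  assumes "0 \<le> (x::real)"
  shows "x ^ n / fact n \<le> exp x"
proof -
  obtain t where t: "exp x = (\<Sum>m<Suc n. x ^ m / fact m) + exp t / fact (Suc n) * x ^ Suc n"
    using Maclaurin_exp_le[of x "Suc n"] by blast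
  have "x ^ n / fact n \<le> (\<Sum>m<Suc n. x ^ m / fact m)"
    using assms by (intro member_le_sum) auto
  moreover have "0 \<le> exp t / fact (Suc n) * x ^ Suc n" using assms by simp
  ultimately show ?thesis using t by linarith
qed

lemma bdd_above_assoc_fun_terms:
  assumes M: "weight_sequence M" and "0 \<le> \<rho>"
  shows "bdd_above (range (\<lambda>p. ln (\<rho> ^ p / M p)))"
proof -
  obtain c0 L0 where c: "L0 \<ge> 1" "\<And>p. fact p \<le> c0 * L0 ^ p * M p"
    using M unfolding weight_sequence_def by auto
  have "ln (\<rho> ^ p / M p) \<le> c0 * exp (L0 * \<rho>)" for p
  proof -
    have ln_le: "ln t \<le> t" if "0 \<le> t" for t :: real
      using ln_bound[of t] that by (cases "t = 0") auto
    have "ln (\<rho> ^ p / M p) \<le> \<rho> ^ p / M p"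
      using assms weight_sequence_pos[OF M, of p] by (intro ln_le) simp
    also have "\<dots> \<le> c0 * ((L0 * \<rho>) ^ p / fact p)"
    proof -
      have "\<rho> ^ p * fact p \<le> \<rho> ^ p * (c0 * L0 ^ p * M p)"
        using c(2)[of p] assms by (intro mult_left_mono) auto
      then show ?thesis using weight_sequence_pos[OF M, of p]
        by (simp add: divide_simps power_mult_distrib mult_ac)
    qed
    also have "\<dots> \<le> c0 * exp (L0 * \<rho>)"
      using pow_div_fact_le_exp[of "L0 * \<rho>" p] c(1) assms c(2)[of 0] weight_sequence_0[OF M]
      by (intro mult_left_mono) auto
    finally show ?thesis .
  qed
  then show ?thesis by (intro bdd_aboveI2)
qed

lemma exp_assoc_fun_ge:
  assumes M: "weight_sequence M" and "0 \<le> \<rho>"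
  shows "\<rho> ^ p / M p \<le> exp (assoc_fun M \<rho>)"
proof (cases "0 < \<rho> ^ p / M p")
  case True
  have "ln (\<rho> ^ p / M p) \<le> assoc_fun M \<rho>"
    unfolding assoc_fun_def by (rule cSUP_upper[OF UNIV_I bdd_above_assoc_fun_terms[OF assms]])
  then show ?thesis using True by (metis exp_le_cancel_iff exp_ln)
next
  case False
  then show ?thesis using exp_gt_zero[of "assoc_fun M \<rho>"] by linarith
qed

lemma exp_assoc_fun_mult_le:
  assumes M: "weight_sequence M" and "0 \<le> \<rho>" "0 \<le> N"
    and terms: "\<And>p. \<rho> ^ p / M p * N \<le> B"
  shows "exp (assoc_fun M \<rho>) * N \<le> B"
proof (cases "N = 0")
  case True
  then show ?thesis using terms[of 0] by simp
next
  case False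
  then have N: "0 < N" using assms by simp
  have M0: "M 0 = 1" using weight_sequence_0[OF M] .
  have B1: "1 \<le> B / N" using terms[of 0] N M0 by (simp add: divide_simps)
  have "assoc_fun M \<rho> \<le> ln (B / N)"
    unfolding assoc_fun_def
  proof (rule cSUP_least)
    fix p
    show "ln (\<rho> ^ p / M p) \<le> ln (B / N)"
    proof (cases "0 < \<rho> ^ p / M p")
      case True
      have "\<rho> ^ p / M p \<le> B / N" using terms[of p] N by (simp add: divide_simps)
      then show ?thesis using True by (intro ln_mono) auto
    next
      case False
      moreover have "0 \<le> \<rho> ^ p / M p" using assms(2) weight_sequence_pos[OF M, of p] by simp
      ultimately have "\<rho> ^ p / M p = 0" by linarith
      then have "ln (\<rho> ^ p / M p) = 0" by (simp only: ln_0)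
      then show ?thesis using B1 by simp
    qed
  qed simp
  then have "exp (assoc_fun M \<rho>) \<le> B / N"
    using B1 by (metis exp_le_cancel_iff exp_ln less_le_trans zero_less_one)
  then show ?thesis using N by (simp add: divide_simps)
qed

lemma one_le_exp_assoc_fun:
  assumes "weight_sequence M" "0 \<le> \<rho>"
  shows "1 \<le> exp (assoc_fun M \<rho>)"
  using exp_assoc_fun_ge[OF assms, of 0] weight_sequence_0[OF assms(1)] by simp

lemma exp_assoc_fun_mono:
  assumes M: "weight_sequence M" and "0 \<le> \<rho>" "\<rho> \<le> \<sigma>"
  shows "exp (assoc_fun M \<rho>) \<le> exp (assoc_fun M \<sigma>)"
proof -
  have "\<rho> ^ p / M p * 1 \<le> exp (assoc_fun M \<sigma>)" for p
  proof -
    have "\<rho> ^ p / M p \<le> \<sigma> ^ p / M p"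
      using assms weight_sequence_pos[OF M, of p] by (intro divide_right_mono power_mono) auto
    then show ?thesis using exp_assoc_fun_ge[OF M, of \<sigma> p] assms by simp
  qed
  from exp_assoc_fun_mult_le[OF M assms(2) _ this] show ?thesis by simp
qed

lemma exp_assoc_fun_square_le:
  assumes M: "weight_sequence M" and "0 \<le> \<rho>" "0 \<le> H"
    and M2: "\<And>p q. M (p + q) \<le> c0 * H ^ (p + q) * M p * M q"
  shows "exp (assoc_fun M \<rho>) * exp (assoc_fun M \<rho>) \<le> c0 * exp (assoc_fun M (H * \<rho>))"
proof -
  have pos: "\<And>p. 0 < M p" using weight_sequence_pos[OF M] .
  have terms: "\<rho> ^ p / M p * (\<rho> ^ q / M q) \<le> c0 * exp (assoc_fun M (H * \<rho>))" for p q
  proof -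
    have "\<rho> ^ (p + q) * M (p + q) \<le> \<rho> ^ (p + q) * (c0 * H ^ (p + q) * M p * M q)"
      using M2[of p q] assms by (intro mult_left_mono) auto
    then have "\<rho> ^ p / M p * (\<rho> ^ q / M q) \<le> c0 * ((H * \<rho>) ^ (p + q) / M (p + q))"
      using pos[of p] pos[of q] pos[of "p + q"]
      by (simp add: divide_simps power_add power_mult_distrib mult_ac)
    also have "\<dots> \<le> c0 * exp (assoc_fun M (H * \<rho>))"
      using exp_assoc_fun_ge[OF M, of "H * \<rho>" "p + q"] assms M2[of 0 0] weight_sequence_0[OF M]
      by (intro mult_left_mono) auto
    finally show ?thesis .
  qed
  have "exp (assoc_fun M \<rho>) * (\<rho> ^ q / M q) \<le> c0 * exp (assoc_fun M (H * \<rho>))" for q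
    by (rule exp_assoc_fun_mult_le[OF M assms(2) _ terms]) (use assms pos[of q] in simp)
  then have "\<rho> ^ q / M q * exp (assoc_fun M \<rho>) \<le> c0 * exp (assoc_fun M (H * \<rho>))" for q
    by (simp add: mult.commute)
  from exp_assoc_fun_mult_le[OF M assms(2) _ this] show ?thesis by simp
qed

lemma one_plus_power_le:
  assumes "0 \<le> (r::real)"
  shows "(1 + r) ^ m \<le> 2 ^ m * (1 + r ^ m)"
proof (cases "r \<le> 1")
  case True
  then have "(1 + r) ^ m \<le> 2 ^ m" using assms by (intro power_mono) auto
  then show ?thesis using assms by (simp add: add_increasing2 order_trans)
next
  case False
  then have "(1 + r) ^ m \<le> (2 * r) ^ m" by (intro power_mono) auto
  then show ?thesis by (simp add: power_mult_distrib distrib_left order_trans)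
qed

lemma poly_le_exp_assoc_fun:
  assumes A: "weight_sequence A" and "0 < \<sigma>"
  shows "\<exists>c>0. \<forall>r\<ge>0. (1 + r) ^ N \<le> c * exp (assoc_fun A (\<sigma> * r))"
proof (intro exI conjI allI impI)
  have AN: "0 < A N" using weight_sequence_pos[OF A] .
  show "0 < 2 ^ N * (1 + A N / \<sigma> ^ N)" using AN assms by (simp add: add_pos_nonneg)
  fix r :: real assume r: "0 \<le> r"
  have E1: "1 \<le> exp (assoc_fun A (\<sigma> * r))" using one_le_exp_assoc_fun[OF A] assms r by simp
  have "r ^ N = A N / \<sigma> ^ N * ((\<sigma> * r) ^ N / A N)"
    using AN assms by (simp add: power_mult_distrib)
  also have "\<dots> \<le> A N / \<sigma> ^ N * exp (assoc_fun A (\<sigma> * r))"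
    using exp_assoc_fun_ge[OF A, of "\<sigma> * r" N] AN assms r by (intro mult_left_mono) auto
  finally have "r ^ N \<le> A N / \<sigma> ^ N * exp (assoc_fun A (\<sigma> * r))" .
  then have "1 + r ^ N \<le> (1 + A N / \<sigma> ^ N) * exp (assoc_fun A (\<sigma> * r))"
    unfolding distrib_right mult_1_left using E1 by linarith
  then have "2 ^ N * (1 + r ^ N) \<le> 2 ^ N * ((1 + A N / \<sigma> ^ N) * exp (assoc_fun A (\<sigma> * r)))"
    by (rule mult_left_mono) simp
  with one_plus_power_le[OF r, of N]
  show "(1 + r) ^ N \<le> 2 ^ N * (1 + A N / \<sigma> ^ N) * exp (assoc_fun A (\<sigma> * r))"
    by (simp only: mult.assoc)
qed

(* With E = exp o A and m = max a a', both E(h d) and E(2 h a) are at most E(2 h m), and (M.2)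
   for A gives E(2 h m)^2 \<le> c0 E(2 H h m). *)
lemma exp_assoc_fun_separation:
  assumes A: "weight_sequence A" and "1 \<le> H"
    and A_M2: "\<And>p q. A (p + q) \<le> c0 * H ^ (p + q) * A p * A q"
    and "0 < h" "2 * H * h \<le> h'" "0 \<le> a" "0 \<le> a'" "0 \<le> d" "d \<le> a + a'"
  shows "exp (assoc_fun A (h * d)) * exp (assoc_fun A (2 * h * a))
           \<le> c0 * (exp (assoc_fun A (h' * a)) * exp (assoc_fun A (h' * a')))"
proof -
  let ?E = "\<lambda>\<rho>. exp (assoc_fun A \<rho>)"
  define m where "m = max a a'"
  have m: "0 \<le> m" "a \<le> m" "a' \<le> m" using assms by (auto simp: m_def)
  have d: "d \<le> 2 * m" using m assms by linarith
  have "?E (h * d) \<le> ?E (2 * h * m)"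
    using d assms by (intro exp_assoc_fun_mono[OF A]) auto
  moreover have "?E (2 * h * a) \<le> ?E (2 * h * m)"
    using m assms by (intro exp_assoc_fun_mono[OF A]) auto
  ultimately have "?E (h * d) * ?E (2 * h * a) \<le> ?E (2 * h * m) * ?E (2 * h * m)"
    by (intro mult_mono) auto
  also have "\<dots> \<le> c0 * ?E (H * (2 * h * m))"
    using m assms by (intro exp_assoc_fun_square_le[OF A _ _ A_M2]) auto
  also have "\<dots> \<le> c0 * ?E (h' * m)"
  proof (intro mult_left_mono exp_assoc_fun_mono[OF A])
    have "H * (2 * h * m) = (2 * H * h) * m" by simp
    also have "\<dots> \<le> h' * m" using assms m(1) by (intro mult_right_mono) auto
    finally show "H * (2 * h * m) \<le> h' * m" .
    show "0 \<le> c0" using A_M2[of 0 0] weight_sequence_0[OF A] by simp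
  qed (use m assms in auto)
  also have "\<dots> \<le> c0 * (?E (h' * a) * ?E (h' * a'))"
  proof (intro mult_left_mono)
    have "0 < 2 * H * h" using assms by simp
    then have "0 \<le> h'" using assms by linarith
    then have "1 \<le> ?E (h' * a)" "1 \<le> ?E (h' * a')"
      using assms by (intro one_le_exp_assoc_fun[OF A] mult_nonneg_nonneg; simp)+
    then show "?E (h' * m) \<le> ?E (h' * a) * ?E (h' * a')"
      unfolding m_def by (cases "a \<le> a'") (auto simp: max_def)
    show "0 \<le> c0" using A_M2[of 0 0] weight_sequence_0[OF A] by simp
  qed
  finally show ?thesis .
qed

lemma inverse_exp_assoc_fun_product_le:
  assumes A: "weight_sequence A" and H: "1 \<le> H"
    and A_M2: "\<And>p q. A (p + q) \<le> c0 * H ^ (p + q) * A p * A q"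
    and h: "0 < h" and hh': "2 * H * h \<le> h'"
    and poly: "(1 + a) ^ N \<le> cP * exp (assoc_fun A (2 * h * a))"
    and "0 \<le> a" "0 \<le> a'" "0 \<le> d" "d \<le> a + a'"
  shows "1 / exp (assoc_fun A (h' * a)) * (1 / exp (assoc_fun A (h' * a')))
           \<le> c0 * cP * exp (- assoc_fun A (h * d)) / (1 + a) ^ N"
proof -
  let ?E = "\<lambda>\<rho>. exp (assoc_fun A \<rho>)"
  have sep: "?E (h * d) * ?E (2 * h * a) \<le> c0 * (?E (h' * a) * ?E (h' * a'))"
    using assms by (intro exp_assoc_fun_separation[OF A H A_M2 h hh']) auto
  have "0 < (1 + a) ^ N" using \<open>0 \<le> a\<close> by simp
  with poly have "0 < cP * ?E (2 * h * a)" by linarith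
  then have cP: "0 \<le> cP" by (simp add: zero_less_mult_iff)
  have "(1 + a) ^ N * ?E (h * d) \<le> cP * ?E (2 * h * a) * ?E (h * d)"
    using poly by (intro mult_right_mono) auto
  also have "\<dots> \<le> cP * (c0 * (?E (h' * a) * ?E (h' * a')))"
    using mult_left_mono[OF sep cP] by (simp add: mult_ac)
  finally have chain: "(1 + a) ^ N * ?E (h * d) \<le> cP * (c0 * (?E (h' * a) * ?E (h' * a')))" .
  have frac: "1 / E1 * (1 / E2) \<le> c0 * cP * inverse Ed / X"
    if "0 < E1" "0 < E2" "0 < Ed" "0 < X" "X * Ed \<le> cP * (c0 * (E1 * E2))" for E1 E2 Ed X :: real
    using that by (simp add: field_simps mult.commute mult.left_commute)
  show ?thesis
    unfolding exp_minus by (rule frac[OF _ _ _ _ chain]) (use \<open>0 \<le> a\<close> in simp_all)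
qed

lemma moment_mult_power_le:
  assumes M: "weight_sequence M" and "1 \<le> H"
    and M_M2: "\<And>p q. M (p + q) \<le> c0 * H ^ (p + q) * M p * M q"
    and "0 < \<rho>" "0 \<le> \<tau>" "\<tau> * H \<le> \<rho>" "0 \<le> r" "0 \<le> N"
    and moments: "\<And>k. (\<rho> * r) ^ k * N \<le> K * M k"
  shows "(\<tau> * r) ^ p * N * r ^ m \<le> c0 * (H / \<rho>) ^ m * M m * (K * M p)"
proof -
  have K: "0 \<le> K" using moments[of 0] assms weight_sequence_0[OF M] by simp
  have c0: "0 \<le> c0" using M_M2[of 0 0] weight_sequence_0[OF M] by simp
  have "(\<tau> * r) ^ p * N * r ^ m = (\<tau> / \<rho>) ^ p / \<rho> ^ m * ((\<rho> * r) ^ (p + m) * N)"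
    using assms by (simp add: power_add power_mult_distrib field_simps)
  also have "\<dots> \<le> (\<tau> / \<rho>) ^ p / \<rho> ^ m * (K * (c0 * H ^ (p + m) * M p * M m))"
  proof (rule mult_left_mono)
    show "(\<rho> * r) ^ (p + m) * N \<le> K * (c0 * H ^ (p + m) * M p * M m)"
      using moments[of "p + m"] mult_left_mono[OF M_M2[of p m] K] by linarith
  qed (use assms in simp)
  also have "\<dots> = (\<tau> * H / \<rho>) ^ p * (c0 * (H / \<rho>) ^ m * M m * (K * M p))"
    using assms by (simp add: power_add power_mult_distrib field_simps)
  also have "\<dots> \<le> 1 * (c0 * (H / \<rho>) ^ m * M m * (K * M p))"
    using assms K c0 weight_sequence_pos[OF M, of p] weight_sequence_pos[OF M, of m]
    by (intro mult_right_mono power_le_one) (auto simp: pos_divide_le_eq)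
  finally show ?thesis by simp
qed

lemma exp_assoc_fun_mult_le_of_moments:
  assumes M: "weight_sequence M" and "1 \<le> H"
    and M_M2: "\<And>p q. M (p + q) \<le> c0 * H ^ (p + q) * M p * M q"
    and "0 < \<rho>" "0 \<le> \<tau>" "\<tau> * H \<le> \<rho>" "0 \<le> r" "0 \<le> N"
    and moments: "\<And>k. (\<rho> * r) ^ k * N \<le> K * M k"
  shows "exp (assoc_fun M (\<tau> * r)) * (N * (1 + r) ^ m)
           \<le> 2 ^ m * (1 + c0 * (H / \<rho>) ^ m * M m) * K"
proof (rule exp_assoc_fun_mult_le[OF M])
  fix p
  have pos: "0 < M p" using weight_sequence_pos[OF M] .
  have "\<tau> * 1 \<le> \<tau> * H" using assms by (intro mult_left_mono) auto
  then have "(\<tau> * r) ^ p \<le> (\<rho> * r) ^ p"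
    using assms by (intro power_mono mult_right_mono) auto
  from mult_right_mono[OF this \<open>0 \<le> N\<close>]
  have low: "(\<tau> * r) ^ p * N \<le> K * M p" using moments[of p] by linarith
  have "(\<tau> * r) ^ p * N * (1 + r) ^ m \<le> (\<tau> * r) ^ p * N * (2 ^ m * (1 + r ^ m))"
    using one_plus_power_le[of r m] assms by (intro mult_left_mono) auto
  also have "\<dots> = 2 ^ m * ((\<tau> * r) ^ p * N + (\<tau> * r) ^ p * N * r ^ m)"
    by (simp add: algebra_simps)
  also have "\<dots> \<le> 2 ^ m * (K * M p + c0 * (H / \<rho>) ^ m * M m * (K * M p))"
    using low moment_mult_power_le[OF assms, of p m] by simp
  finally have "(\<tau> * r) ^ p * N * (1 + r) ^ m / M p
                \<le> 2 ^ m * (K * M p + c0 * (H / \<rho>) ^ m * M m * (K * M p)) / M p"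
    using pos by (intro divide_right_mono) auto
  also have "\<dots> = 2 ^ m * (1 + c0 * (H / \<rho>) ^ m * M m) * K"
    using pos by (simp add: field_simps)
  finally show "(\<tau> * r) ^ p / M p * (N * (1 + r) ^ m) \<le> 2 ^ m * (1 + c0 * (H / \<rho>) ^ m * M m) * K"
    by (simp add: mult.assoc)
qed (use assms in auto)

section \<open>Directional derivatives\<close>

lemma has_vector_derivative_dir_deriv:
  fixes F :: "'a::euclidean_space \<Rightarrow> complex"
  assumes "F differentiable at (x + t *\<^sub>R b)"
  shows "((\<lambda>s. F (x + s *\<^sub>R b)) has_vector_derivative dir_deriv b F (x + t *\<^sub>R b)) (at t)"
proof -
  obtain D where D: "(F has_derivative D) (at (x + t *\<^sub>R b))"
    using assms unfolding differentiable_def by blast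
  have along: "((\<lambda>s. F (z + s *\<^sub>R b)) has_vector_derivative D b) (at u)"
    if "z + u *\<^sub>R b = x + t *\<^sub>R b" for z u
  proof -
    have "((\<lambda>s. z + s *\<^sub>R b) has_derivative (\<lambda>s. s *\<^sub>R b)) (at u)"
      by (auto intro!: derivative_eq_intros)
    from has_derivative_compose[OF this D[folded that]] show ?thesis
      using has_derivative_linear[OF D] unfolding has_vector_derivative_def
      by (simp add: linear_scale)
  qed
  have "dir_deriv b F (x + t *\<^sub>R b) = D b"
    unfolding dir_deriv_def by (rule vector_derivative_at[OF along]) simp
  with along[of x t] show ?thesis by simp
qed

abbreviation dir_deriv_pow :: "'a::euclidean_space \<Rightarrow> nat \<Rightarrow> ('a \<Rightarrow> complex) \<Rightarrow> 'a \<Rightarrow> complex" where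
  "dir_deriv_pow b k f \<equiv> iter_deriv (replicate k b) f"

lemma smooth_fun_dir_deriv_pow_differentiable:
  assumes "smooth_fun f" "b \<in> Basis"
  shows "dir_deriv_pow b k f differentiable at x"
  using assms unfolding smooth_fun_def by (metis in_set_replicate subsetI)

lemma binomial_sum_Suc:
  fixes a g :: "nat \<Rightarrow> 'b::comm_semiring_1"
  shows "(\<Sum>i\<le>k. of_nat (k choose i) * (a i * g (Suc (k - i)) + a (Suc i) * g (k - i)))
       = (\<Sum>i\<le>Suc k. of_nat (Suc k choose i) * a i * g (Suc k - i))"
proof -
  have "(\<Sum>i\<le>k. of_nat (k choose i) * a i * g (Suc k - i))
      = (\<Sum>i\<le>Suc k. of_nat (k choose i) * a i * g (Suc k - i))"
    by (simp add: binomial_eq_0)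
  also have "\<dots> = a 0 * g (Suc k) + (\<Sum>i\<le>k. of_nat (k choose Suc i) * a (Suc i) * g (k - i))"
    by (subst sum.atMost_Suc_shift) simp
  finally have "(\<Sum>i\<le>Suc k. of_nat (Suc k choose i) * a i * g (Suc k - i))
      = (\<Sum>i\<le>k. of_nat (k choose i) * a i * g (Suc k - i))
        + (\<Sum>i\<le>k. of_nat (k choose i) * a (Suc i) * g (k - i))"
    by (simp add: sum.atMost_Suc_shift sum.distrib algebra_simps del: sum.atMost_Suc)
  then show ?thesis
    by (simp add: sum.distrib algebra_simps Suc_diff_le)
qed

lemma dir_deriv_pow_mult:
  fixes F G :: "'a::euclidean_space \<Rightarrow> complex"
  assumes dF: "\<And>k x. dir_deriv_pow b k F differentiable at x"
    and dG: "\<And>k x. dir_deriv_pow b k G differentiable at x"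
  shows "dir_deriv_pow b k (\<lambda>x. F x * G x)
           = (\<lambda>x. \<Sum>i\<le>k. of_nat (k choose i) * dir_deriv_pow b i F x * dir_deriv_pow b (k - i) G x)"
proof (induction k)
  case (Suc k)
  show ?case
  proof
    fix x
    let ?a = "\<lambda>i. dir_deriv_pow b i F x" and ?g = "\<lambda>j. dir_deriv_pow b j G x"
    have vF: "((\<lambda>s. dir_deriv_pow b i F (x + s *\<^sub>R b)) has_vector_derivative ?a (Suc i)) (at 0)" for i
      using has_vector_derivative_dir_deriv[of "dir_deriv_pow b i F" x 0 b] dF by simp
    have vG: "((\<lambda>s. dir_deriv_pow b j G (x + s *\<^sub>R b)) has_vector_derivative ?g (Suc j)) (at 0)" for j
      using has_vector_derivative_dir_deriv[of "dir_deriv_pow b j G" x 0 b] dG by simp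
    have "((\<lambda>s. \<Sum>i\<le>k. of_nat (k choose i) * (dir_deriv_pow b i F (x + s *\<^sub>R b)
                                            * dir_deriv_pow b (k - i) G (x + s *\<^sub>R b)))
          has_vector_derivative
          (\<Sum>i\<le>k. of_nat (k choose i) * (dir_deriv_pow b i F (x + 0 *\<^sub>R b) * ?g (Suc (k - i))
                                        + ?a (Suc i) * dir_deriv_pow b (k - i) G (x + 0 *\<^sub>R b)))) (at 0)"
      by (intro has_vector_derivative_sum has_vector_derivative_mult_right has_vector_derivative_mult vF vG)
    then have "dir_deriv b (\<lambda>x. \<Sum>i\<le>k. of_nat (k choose i) * (dir_deriv_pow b i F x * dir_deriv_pow b (k - i) G x)) x
        = (\<Sum>i\<le>k. of_nat (k choose i) * (?a i * ?g (Suc (k - i)) + ?a (Suc i) * ?g (k - i)))"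
      unfolding dir_deriv_def using vector_derivative_at by simp
    moreover have "dir_deriv_pow b (Suc k) (\<lambda>x. F x * G x) x
        = dir_deriv b (\<lambda>x. \<Sum>i\<le>k. of_nat (k choose i) * (dir_deriv_pow b i F x * dir_deriv_pow b (k - i) G x)) x"
      by (simp only: replicate_Suc iter_deriv.simps Suc.IH mult.assoc)
    ultimately show "dir_deriv_pow b (Suc k) (\<lambda>x. F x * G x) x
        = (\<Sum>i\<le>Suc k. of_nat (Suc k choose i) * ?a i * ?g (Suc k - i))"
      using binomial_sum_Suc[of k ?a ?g] by (simp only:)
  qed
qed simp

lemma dir_deriv_pow_mult_differentiable:
  fixes F G :: "'a::euclidean_space \<Rightarrow> complex"
  assumes "\<And>k x. dir_deriv_pow b k F differentiable at x"
    and "\<And>k x. dir_deriv_pow b k G differentiable at x"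
  shows "dir_deriv_pow b k (\<lambda>x. F x * G x) differentiable at z"
  unfolding dir_deriv_pow_mult[OF assms] using assms
  by (intro differentiable_sum differentiable_mult) auto

lemma norm_dir_deriv_pow_mult_le:
  fixes F G :: "'a::euclidean_space \<Rightarrow> complex"
  assumes M: "weight_sequence M" and "0 < h"
    and dF: "\<And>k x. dir_deriv_pow b k F differentiable at x"
    and dG: "\<And>k x. dir_deriv_pow b k G differentiable at x"
    and bF: "\<And>i. norm (dir_deriv_pow b i F x) \<le> CF * M i / h ^ i * u"
    and bG: "\<And>i. norm (dir_deriv_pow b i G x) \<le> CG * M i / h ^ i * v"
  shows "norm (dir_deriv_pow b k (\<lambda>x. F x * G x) x) \<le> CF * CG * (2 / h) ^ k * M k * (u * v)"
proof -
  have pos: "\<And>i. 0 < M i" using weight_sequence_pos[OF M] .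
  have M0: "M 0 = 1" using weight_sequence_0[OF M] .
  have uv: "0 \<le> CF * u * (CG * v)"
    using order_trans[OF norm_ge_zero bF[of 0]] order_trans[OF norm_ge_zero bG[of 0]] M0 by simp
  have summand: "norm (dir_deriv_pow b i F x) * norm (dir_deriv_pow b (k - i) G x)
               \<le> CF * CG * M k / h ^ k * (u * v)" if "i \<le> k" for i
  proof -
    have "norm (dir_deriv_pow b i F x) * norm (dir_deriv_pow b (k - i) G x)
          \<le> (CF * M i / h ^ i * u) * (CG * M (k - i) / h ^ (k - i) * v)"
      by (intro mult_mono bF bG order_trans[OF norm_ge_zero bF] norm_ge_zero)
    also have "\<dots> = (M i * M (k - i)) / h ^ k * (CF * u * (CG * v))"
      using that \<open>0 < h\<close> by (simp add: power_add[symmetric] field_simps)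
    also have "\<dots> \<le> M k / h ^ k * (CF * u * (CG * v))"
      using weight_sequence_mult_le[OF M, of i "k - i"] that uv \<open>0 < h\<close>
      by (intro mult_right_mono divide_right_mono) auto
    finally show ?thesis by (simp add: field_simps)
  qed
  have "norm (dir_deriv_pow b k (\<lambda>x. F x * G x) x)
        \<le> (\<Sum>i\<le>k. real (k choose i) * (norm (dir_deriv_pow b i F x) * norm (dir_deriv_pow b (k - i) G x)))"
    unfolding dir_deriv_pow_mult[OF dF dG]
    by (rule order_trans[OF norm_sum]) (simp add: norm_mult mult.assoc)
  also have "\<dots> \<le> (\<Sum>i\<le>k. real (k choose i) * (CF * CG * M k / h ^ k * (u * v)))"
    using summand by (intro sum_mono mult_left_mono) auto
  also have "\<dots> = 2 ^ k * (CF * CG * M k / h ^ k * (u * v))"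
  proof -
    have "(\<Sum>i\<le>k. real (k choose i)) = 2 ^ k"
      using choose_row_sum[of k] by (metis of_nat_numeral of_nat_power of_nat_sum)
    then show ?thesis by (simp only: sum_distrib_right[symmetric])
  qed
  also have "\<dots> = CF * CG * (2 / h) ^ k * M k * (u * v)"
    by (simp add: power_divide)
  finally show ?thesis .
qed

lemma norm_diff_le_along_line:
  fixes F :: "'a::euclidean_space \<Rightarrow> complex"
  assumes dF: "\<And>z. F differentiable at z" and "0 < t"
    and bound: "\<And>s. 0 \<le> s \<Longrightarrow> s \<le> t \<Longrightarrow> norm (dir_deriv b F (\<xi> + s *\<^sub>R b)) \<le> B"
  shows "norm (F (\<xi> + t *\<^sub>R b) - F \<xi>) \<le> t * B"
proof -
  let ?g = "\<lambda>s. F (\<xi> + s *\<^sub>R b)"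
  have vd: "(?g has_vector_derivative dir_deriv b F (\<xi> + s *\<^sub>R b)) (at s)" for s
    using has_vector_derivative_dir_deriv[OF dF] .
  have "continuous_on {0..t} ?g"
    using vd by (intro continuous_at_imp_continuous_on) (auto intro: has_vector_derivative_continuous)
  then have "norm (?g t - ?g 0) \<le> t * B - 0 * B"
    by (rule differentiable_bound_general[OF \<open>0 < t\<close> _ _ vd, of "\<lambda>s. s * B" "\<lambda>_. B"])
       (auto intro!: derivative_eq_intros continuous_intros bound
             simp: has_real_derivative_iff_has_vector_derivative[symmetric])
  then show ?thesis by simp
qed

lemma has_vector_derivative_imp_diff_quotient_LIMSEQ:
  fixes g :: "real \<Rightarrow> 'b::real_normed_vector"
  assumes "(g has_vector_derivative v) (at 0)"
  shows "(\<lambda>j. real (Suc j) *\<^sub>R (g (1 / real (Suc j)) - g 0)) \<longlonglongrightarrow> v"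
proof -
  let ?t = "\<lambda>j. 1 / real (Suc j)"
  have "filterlim ?t (at 0) sequentially"
    using LIMSEQ_inverse_real_of_nat by (intro filterlim_atI) (auto simp: inverse_eq_divide)
  moreover have "((\<lambda>s. norm (g (0 + s) - g 0 - s *\<^sub>R v) / norm s) \<longlongrightarrow> 0) (at 0)"
    using assms unfolding has_vector_derivative_def has_derivative_at by blast
  ultimately have "(\<lambda>j. norm (g (?t j) - g 0 - ?t j *\<^sub>R v) / norm (?t j)) \<longlonglongrightarrow> 0"
    by (auto dest: filterlim_compose)
  moreover have "norm (g (?t j) - g 0 - ?t j *\<^sub>R v) / norm (?t j)
                 = norm (real (Suc j) *\<^sub>R (g (?t j) - g 0) - v)" for j
  proof -
    have "real (Suc j) *\<^sub>R (g (?t j) - g 0) - v = real (Suc j) *\<^sub>R (g (?t j) - g 0 - ?t j *\<^sub>R v)"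
      by (simp add: algebra_simps)
    then show ?thesis by (simp add: divide_inverse)
  qed
  ultimately have "(\<lambda>j. real (Suc j) *\<^sub>R (g (?t j) - g 0) - v) \<longlonglongrightarrow> 0"
    by (simp add: tendsto_norm_zero_iff)
  then show ?thesis by (rule LIM_zero_cancel)
qed

section \<open>Fourier transforms of directional derivatives\<close>

lemma norm_inv_fourier_le: "norm (inv_fourier f x) \<le> (\<integral>\<xi>. norm (f \<xi>) \<partial>lborel)"
proof -
  have "norm (inv_fourier f x) \<le> (\<integral>\<xi>. norm (cis (2 * pi * (x \<bullet> \<xi>)) * f \<xi>) \<partial>lborel)"
    unfolding inv_fourier_def by (rule integral_norm_bound)
  then show ?thesis by (simp add: norm_mult)
qed

lemma inv_fourier_translate:
  fixes F :: "'a::euclidean_space \<Rightarrow> complex"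
  assumes "F \<in> borel_measurable borel"
  shows "inv_fourier (\<lambda>\<xi>. F (\<xi> + v)) x = cis (- (2 * pi * (x \<bullet> v))) * inv_fourier F x"
proof -
  let ?e = "\<lambda>\<xi>. cis (2 * pi * (x \<bullet> \<xi>))"
  have "inv_fourier F x = integral\<^sup>L (distr lborel borel ((+) v)) (\<lambda>\<zeta>. ?e \<zeta> * F \<zeta>)"
    unfolding inv_fourier_def lborel_distr_plus ..
  also have "\<dots> = integral\<^sup>L lborel (\<lambda>\<xi>. ?e (v + \<xi>) * F (v + \<xi>))"
  proof (rule integral_distr)
    have "?e \<in> borel_measurable borel"
      by (intro borel_measurable_continuous_onI continuous_intros)
    then show "(\<lambda>\<zeta>. ?e \<zeta> * F \<zeta>) \<in> borel_measurable borel"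
      using assms by (intro borel_measurable_times)
  qed simp
  also have "\<dots> = integral\<^sup>L lborel (\<lambda>\<xi>. cis (2 * pi * (x \<bullet> v)) * (?e \<xi> * F (\<xi> + v)))"
    by (intro Bochner_Integration.integral_cong refl)
       (simp add: inner_add_right cis_mult[symmetric] algebra_simps)
  also have "\<dots> = cis (2 * pi * (x \<bullet> v)) * inv_fourier (\<lambda>\<xi>. F (\<xi> + v)) x"
    unfolding inv_fourier_def by (rule integral_mult_right_zero)
  finally show ?thesis by (simp add: mult.assoc[symmetric] cis_mult)
qed

(* Dominated convergence for the difference quotients with step 1/(j+1): w' dominates them by the
   mean value inequality, and w makes the shifted integrands integrable, so the integral splits. *)
lemma inv_fourier_diff_quotient_LIMSEQ:
  fixes F :: "'a::euclidean_space \<Rightarrow> complex" and w w' :: "'a \<Rightarrow> real"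
  assumes dF: "\<And>z. F differentiable at z"
    and cD: "continuous_on UNIV (dir_deriv b F)"
    and w: "integrable lborel w" and w': "integrable lborel w'"
    and bF: "\<And>\<xi> s. \<bar>s\<bar> \<le> 1 \<Longrightarrow> norm (F (\<xi> + s *\<^sub>R b)) \<le> w \<xi>"
    and bD: "\<And>\<xi> s. \<bar>s\<bar> \<le> 1 \<Longrightarrow> norm (dir_deriv b F (\<xi> + s *\<^sub>R b)) \<le> w' \<xi>"
  shows "(\<lambda>j. real (Suc j) *\<^sub>R (inv_fourier (\<lambda>\<xi>. F (\<xi> + (1 / real (Suc j)) *\<^sub>R b)) x - inv_fourier F x))
           \<longlonglongrightarrow> inv_fourier (dir_deriv b F) x"
proof -
  let ?e = "\<lambda>\<xi>. cis (2 * pi * (x \<bullet> \<xi>))" and ?t = "\<lambda>j. 1 / real (Suc j)"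
  define q where "q = (\<lambda>j \<xi>. real (Suc j) *\<^sub>R (?e \<xi> * F (\<xi> + ?t j *\<^sub>R b) - ?e \<xi> * F (\<xi> + 0 *\<^sub>R b)))"
  have cF: "continuous_on UNIV F"
    using dF by (intro continuous_at_imp_continuous_on) (auto intro: differentiable_imp_continuous_within)
  have ce: "?e \<in> borel_measurable borel"
    by (intro borel_measurable_continuous_onI continuous_intros)
  have me: "(\<lambda>\<xi>. ?e \<xi> * F (\<xi> + v)) \<in> borel_measurable lborel" for v
  proof -
    have "(\<lambda>\<xi>. F (\<xi> + v)) \<in> borel_measurable borel"
      by (intro borel_measurable_continuous_onI continuous_on_compose2[OF cF] continuous_intros) auto
    with ce show ?thesis by (simp add: borel_measurable_times)
  qed
  have integrable: "integrable lborel (\<lambda>\<xi>. ?e \<xi> * F (\<xi> + s *\<^sub>R b))" if "\<bar>s\<bar> \<le> 1" for s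
    using bF[OF that] by (intro Bochner_Integration.integrable_bound[OF w me])
                         (auto simp: norm_mult intro: order_trans[OF _ abs_ge_self])
  have integral_q: "integral\<^sup>L lborel (q j)
      = real (Suc j) *\<^sub>R (inv_fourier (\<lambda>\<xi>. F (\<xi> + ?t j *\<^sub>R b)) x - inv_fourier F x)" for j
    unfolding q_def inv_fourier_def using integrable[of "?t j"] integrable[of 0] by simp
  have "(\<lambda>j. integral\<^sup>L lborel (q j)) \<longlonglongrightarrow> integral\<^sup>L lborel (\<lambda>\<xi>. ?e \<xi> * dir_deriv b F \<xi>)"
  proof (rule integral_dominated_convergence[OF _ _ w'])
    show "(\<lambda>\<xi>. ?e \<xi> * dir_deriv b F \<xi>) \<in> borel_measurable lborel"
      using ce borel_measurable_continuous_onI[OF cD] by (simp add: borel_measurable_times)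
    show "q j \<in> borel_measurable lborel" for j
      unfolding q_def using me by measurable
    show "AE \<xi> in lborel. (\<lambda>j. q j \<xi>) \<longlonglongrightarrow> ?e \<xi> * dir_deriv b F \<xi>"
    proof (intro AE_I2)
      fix \<xi>
      have "((\<lambda>s. F (\<xi> + s *\<^sub>R b)) has_vector_derivative dir_deriv b F \<xi>) (at 0)"
        using has_vector_derivative_dir_deriv[of F \<xi> 0 b] dF by simp
      from tendsto_mult_left[OF has_vector_derivative_imp_diff_quotient_LIMSEQ[OF this], of "?e \<xi>"]
      show "(\<lambda>j. q j \<xi>) \<longlonglongrightarrow> ?e \<xi> * dir_deriv b F \<xi>"
        unfolding q_def by (simp add: algebra_simps)
    qed
    show "AE \<xi> in lborel. norm (q j \<xi>) \<le> w' \<xi>" for j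
    proof (intro AE_I2)
      fix \<xi>
      have "norm (F (\<xi> + ?t j *\<^sub>R b) - F \<xi>) \<le> ?t j * w' \<xi>"
      proof (rule norm_diff_le_along_line[OF dF])
        fix s assume "0 \<le> s" "s \<le> ?t j"
        moreover have "?t j \<le> 1" by simp
        ultimately show "norm (dir_deriv b F (\<xi> + s *\<^sub>R b)) \<le> w' \<xi>"
          by (intro bD) linarith
      qed simp
      moreover have "q j \<xi> = ?e \<xi> * (real (Suc j) *\<^sub>R (F (\<xi> + ?t j *\<^sub>R b) - F \<xi>))"
        unfolding q_def by (simp add: algebra_simps)
      ultimately show "norm (q j \<xi>) \<le> w' \<xi>"
        by (simp add: norm_mult divide_simps mult.commute)
    qed
  qed
  then show ?thesis unfolding integral_q inv_fourier_def .
qed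

lemma inv_fourier_dir_deriv:
  fixes F :: "'a::euclidean_space \<Rightarrow> complex" and w w' :: "'a \<Rightarrow> real"
  assumes dF: "\<And>z. F differentiable at z"
    and cD: "continuous_on UNIV (dir_deriv b F)"
    and w: "integrable lborel w" and w': "integrable lborel w'"
    and bF: "\<And>\<xi> s. \<bar>s\<bar> \<le> 1 \<Longrightarrow> norm (F (\<xi> + s *\<^sub>R b)) \<le> w \<xi>"
    and bD: "\<And>\<xi> s. \<bar>s\<bar> \<le> 1 \<Longrightarrow> norm (dir_deriv b F (\<xi> + s *\<^sub>R b)) \<le> w' \<xi>"
  shows "inv_fourier (dir_deriv b F) x = (\<i> * of_real (- 2 * pi * (x \<bullet> b))) * inv_fourier F x"
proof -
  let ?a = "- 2 * pi * (x \<bullet> b)" and ?t = "\<lambda>j. 1 / real (Suc j)"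
  define c where "c = (\<lambda>s. cis (?a * s))"
  have mF: "F \<in> borel_measurable borel"
    using dF by (intro borel_measurable_continuous_onI continuous_at_imp_continuous_on)
                (auto intro: differentiable_imp_continuous_within)
  have shifted: "inv_fourier (\<lambda>\<xi>. F (\<xi> + s *\<^sub>R b)) x = c s * inv_fourier F x" for s
    using inv_fourier_translate[OF mF, of "s *\<^sub>R b" x] unfolding c_def by (simp add: algebra_simps)
  have c0: "c 0 = 1" unfolding c_def by simp
  have "((\<lambda>z. exp (z * (\<i> * of_real ?a))) has_field_derivative \<i> * of_real ?a) (at (of_real 0))"
    by (auto intro!: derivative_eq_intros)
  from has_vector_derivative_real_field[OF this]
  have "(c has_vector_derivative \<i> * of_real ?a) (at 0)"
    unfolding c_def by (simp add: cis_conv_exp mult_ac)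
  from tendsto_mult_right[OF has_vector_derivative_imp_diff_quotient_LIMSEQ[OF this], of "inv_fourier F x"]
  have "(\<lambda>j. real (Suc j) *\<^sub>R (inv_fourier (\<lambda>\<xi>. F (\<xi> + ?t j *\<^sub>R b)) x - inv_fourier F x))
          \<longlonglongrightarrow> (\<i> * of_real ?a) * inv_fourier F x"
    unfolding shifted using c0 by (simp add: algebra_simps)
  with inv_fourier_diff_quotient_LIMSEQ[OF assms] show ?thesis
    by (rule LIMSEQ_unique)
qed

lemma norm_inv_fourier_dir_deriv_pow:
  fixes F :: "'a::euclidean_space \<Rightarrow> complex"
  assumes dF: "\<And>k z. dir_deriv_pow b k F differentiable at z"
    and maj: "\<And>k. \<exists>w. integrable lborel w \<and>
                  (\<forall>\<xi> s. \<bar>s\<bar> \<le> 1 \<longrightarrow> norm (dir_deriv_pow b k F (\<xi> + s *\<^sub>R b)) \<le> w \<xi>)"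
  shows "norm (inv_fourier (dir_deriv_pow b k F) x) = (2 * pi * \<bar>x \<bullet> b\<bar>) ^ k * norm (inv_fourier F x)"
proof (induction k)
  case (Suc k)
  obtain w where w: "integrable lborel w"
    "\<And>\<xi> s. \<bar>s\<bar> \<le> 1 \<Longrightarrow> norm (dir_deriv_pow b k F (\<xi> + s *\<^sub>R b)) \<le> w \<xi>"
    using maj[of k] by blast
  obtain w' where w': "integrable lborel w'"
    "\<And>\<xi> s. \<bar>s\<bar> \<le> 1 \<Longrightarrow> norm (dir_deriv b (dir_deriv_pow b k F) (\<xi> + s *\<^sub>R b)) \<le> w' \<xi>"
    using maj[of "Suc k"] by auto
  have "continuous_on UNIV (dir_deriv b (dir_deriv_pow b k F))"
    using dF[of "Suc k"]
    by (intro differentiable_imp_continuous_on differentiable_at_imp_differentiable_on) auto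
  from inv_fourier_dir_deriv[OF dF this w(1) w'(1) w(2) w'(2), of x]
  have "norm (inv_fourier (dir_deriv_pow b (Suc k) F) x)
        = 2 * pi * \<bar>x \<bullet> b\<bar> * norm (inv_fourier (dir_deriv_pow b k F) x)"
    by (simp add: norm_mult abs_mult)
  then show ?case using Suc.IH by simp
qed simp

section \<open>An integrable majorant\<close>

definition coord_decay :: "'a::euclidean_space \<Rightarrow> real" where
  "coord_decay x = (\<Prod>b\<in>Basis. 1 / (1 + \<bar>x \<bullet> b\<bar>)\<^sup>2)"

lemma coord_decay_pos: "0 < coord_decay x"
  unfolding coord_decay_def by (intro prod_pos) auto

lemma continuous_on_coord_decay: "continuous_on UNIV coord_decay"
  unfolding coord_decay_def by (intro continuous_intros) (auto simp: add_pos_nonneg)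

lemma inverse_power_le_coord_decay:
  "1 / (1 + norm x) ^ (2 * DIM('a)) \<le> coord_decay (x :: 'a::euclidean_space)"
proof -
  have "1 / (1 + norm x) ^ (2 * DIM('a)) = (\<Prod>b\<in>(Basis::'a set). 1 / (1 + norm x)\<^sup>2)"
    by (simp add: power_mult power_one_over)
  also have "\<dots> \<le> coord_decay x"
    unfolding coord_decay_def
  proof (rule prod_mono)
    fix b :: 'a assume "b \<in> Basis"
    then have "(1 + \<bar>x \<bullet> b\<bar>)\<^sup>2 \<le> (1 + norm x)\<^sup>2" by (intro power_mono) (auto simp: Basis_le_norm)
    then show "0 \<le> 1 / (1 + norm x)\<^sup>2 \<and> 1 / (1 + norm x)\<^sup>2 \<le> 1 / (1 + \<bar>x \<bullet> b\<bar>)\<^sup>2"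
      by (auto intro!: divide_left_mono simp: add_pos_nonneg)
  qed
  finally show ?thesis .
qed

lemma nn_integral_inverse_square_lt_top: "(\<integral>\<^sup>+t. ennreal (1 / (1 + \<bar>t\<bar>)\<^sup>2) \<partial>lborel) < \<infinity>"
proof -
  let ?f = "\<lambda>t::real. ennreal (1 / (1 + t)\<^sup>2) * indicator {0..} t"
  have m: "?f \<in> borel_measurable borel" by measurable
  have half_line: "(\<integral>\<^sup>+t. ?f t \<partial>lborel) = ennreal (0 - (- 1 / (1 + 0)))"
  proof (rule nn_integral_FTC_atLeast[where F = "\<lambda>t. - 1 / (1 + t)"])
    show "(\<lambda>t::real. 1 / (1 + t)\<^sup>2) \<in> borel_measurable borel" by measurable
    fix t :: real assume "0 \<le> t"
    then show "((\<lambda>t. - 1 / (1 + t)) has_real_derivative 1 / (1 + t)\<^sup>2) (at t)"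
      by (auto intro!: derivative_eq_intros simp: power2_eq_square)
    show "0 \<le> 1 / (1 + t)\<^sup>2" by simp
  next
    have "filterlim (\<lambda>t::real. 1 + t) at_top at_top"
      by (rule filterlim_tendsto_add_at_top[OF tendsto_const filterlim_ident])
    from tendsto_minus[OF tendsto_inverse_0_at_top[OF this]]
    show "((\<lambda>t::real. - 1 / (1 + t)) \<longlongrightarrow> 0) at_top"
      by (simp add: inverse_eq_divide)
  qed
  have le: "ennreal (1 / (1 + \<bar>t\<bar>)\<^sup>2) \<le> ?f t + ?f (0 + (-1) * t)" for t :: real
    by (cases "0 \<le> t") (auto simp: indicator_def)
  have "(\<integral>\<^sup>+t. ennreal (1 / (1 + \<bar>t\<bar>)\<^sup>2) \<partial>lborel) \<le> (\<integral>\<^sup>+t. ?f t + ?f (0 + (-1) * t) \<partial>lborel)"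
    by (intro nn_integral_mono le)
  also have "\<dots> = (\<integral>\<^sup>+t. ?f t \<partial>lborel) + (\<integral>\<^sup>+t. ?f (0 + (-1) * t) \<partial>lborel)"
    by (rule nn_integral_add) (use m in auto)
  also have "(\<integral>\<^sup>+t. ?f (0 + (-1) * t) \<partial>lborel) = (\<integral>\<^sup>+t. ?f t \<partial>lborel)"
    using nn_integral_real_affine[OF m, of "-1" 0] by simp
  finally have "(\<integral>\<^sup>+t. ennreal (1 / (1 + \<bar>t\<bar>)\<^sup>2) \<partial>lborel) \<le> 1 + 1" using half_line by simp
  then show ?thesis by (rule le_less_trans) simp
qed

lemma nn_integral_coord_decay_lt_top:
  "(\<integral>\<^sup>+x. ennreal (coord_decay x) \<partial>(lborel :: 'a::euclidean_space measure)) < \<infinity>"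
proof -
  have "(\<integral>\<^sup>+x. ennreal (coord_decay x) \<partial>(lborel :: 'a measure))
        = (\<integral>\<^sup>+x. (\<Prod>b\<in>Basis. ennreal (1 / (1 + \<bar>x \<bullet> b\<bar>)\<^sup>2)) \<partial>(lborel :: 'a measure))"
    by (simp add: coord_decay_def prod_ennreal)
  also have "\<dots> = (\<Prod>b\<in>(Basis :: 'a set). (\<integral>\<^sup>+t. ennreal (1 / (1 + \<bar>t\<bar>)\<^sup>2) \<partial>lborel))"
    by (rule nn_integral_lborel_prod[where f = "\<lambda>b t. ennreal (1 / (1 + \<bar>t\<bar>)\<^sup>2)"]) auto
  also have "\<dots> < \<infinity>"
    using nn_integral_inverse_square_lt_top by (simp add: power_less_top_ennreal)
  finally show ?thesis .
qed

lemma integrable_coord_decay: "integrable lborel (coord_decay :: 'a::euclidean_space \<Rightarrow> real)"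
proof -
  have "(\<lambda>x. ennreal (norm (coord_decay x))) = (\<lambda>x::'a. ennreal (coord_decay x))"
    by (intro ext) (simp add: abs_of_pos coord_decay_pos)
  then show ?thesis
    using nn_integral_coord_decay_lt_top borel_measurable_continuous_onI[OF continuous_on_coord_decay]
    by (simp add: integrable_iff_bounded)
qed

lemma integrable_coord_decay_shift: "integrable lborel (\<lambda>x. coord_decay (x - c :: 'a::euclidean_space))"
proof -
  have "integrable (distr lborel borel ((+) (- c))) (coord_decay :: 'a \<Rightarrow> real)"
    unfolding lborel_distr_plus by (rule integrable_coord_decay)
  then show ?thesis
    by (subst (asm) integrable_distr_eq)
       (auto intro: borel_measurable_continuous_onI[OF continuous_on_coord_decay])
qed

lemma integral_coord_decay_shift:
  "integral\<^sup>L lborel (\<lambda>x. coord_decay (x - c :: 'a::euclidean_space))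
     = integral\<^sup>L lborel (coord_decay :: 'a \<Rightarrow> real)"
proof -
  have "integral\<^sup>L lborel (coord_decay :: 'a \<Rightarrow> real) = integral\<^sup>L (distr lborel borel ((+) (- c))) coord_decay"
    unfolding lborel_distr_plus ..
  also have "\<dots> = integral\<^sup>L lborel (\<lambda>x. coord_decay (- c + x))"
    by (rule integral_distr) (auto intro: borel_measurable_continuous_onI[OF continuous_on_coord_decay])
  also have "(\<lambda>x. coord_decay (- c + x)) = (\<lambda>x. coord_decay (x - c))" by simp
  finally show ?thesis by (rule sym)
qed

lemma inverse_power_shift_le:
  fixes \<xi> c v :: "'a::real_normed_vector"
  assumes "norm v \<le> 1" "0 \<le> a"
  shows "a / (1 + norm (\<xi> + v - c)) ^ N \<le> 2 ^ N * a / (1 + norm (\<xi> - c)) ^ N"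
proof -
  let ?r = "norm (\<xi> - c)" and ?r' = "norm (\<xi> + v - c)"
  have "?r \<le> ?r' + norm v"
    using norm_triangle_ineq4[of "\<xi> + v - c" v] by (simp add: algebra_simps)
  then have "1 + ?r \<le> 2 * (1 + ?r')" using assms(1) norm_ge_zero[of "\<xi> + v - c"] by argo
  then have "(1 + ?r) ^ N \<le> (2 * (1 + ?r')) ^ N" by (intro power_mono) auto
  then have le: "(1 + ?r) ^ N \<le> 2 ^ N * (1 + ?r') ^ N" by (simp only: power_mult_distrib)
  have "a / (1 + ?r') ^ N = 2 ^ N * a / (2 ^ N * (1 + ?r') ^ N)" by simp
  also have "\<dots> \<le> 2 ^ N * a / (1 + ?r) ^ N"
    using assms(2) by (intro divide_left_mono[OF le]) (auto simp: add_pos_nonneg)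
  finally show ?thesis .
qed

lemma integral_norm_le_coord_decay:
  fixes f :: "'a::euclidean_space \<Rightarrow> complex"
  assumes cont: "continuous_on UNIV f"
    and decay: "\<And>\<xi>. norm (f \<xi>) \<le> a / (1 + norm (\<xi> - c)) ^ (2 * DIM('a))"
  shows "integrable lborel f"
    and "(\<integral>\<xi>. norm (f \<xi>) \<partial>lborel) \<le> a * integral\<^sup>L lborel (coord_decay :: 'a \<Rightarrow> real)"
proof -
  have "0 \<le> a" using order_trans[OF norm_ge_zero decay[of c]] by simp
  have bound: "norm (f \<xi>) \<le> a * coord_decay (\<xi> - c)" for \<xi>
  proof -
    have "a / (1 + norm (\<xi> - c)) ^ (2 * DIM('a)) = a * (1 / (1 + norm (\<xi> - c)) ^ (2 * DIM('a)))"
      by simp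
    then show ?thesis
      using decay[of \<xi>] mult_left_mono[OF inverse_power_le_coord_decay[of "\<xi> - c"] \<open>0 \<le> a\<close>]
      by linarith
  qed
  have majorant: "integrable lborel (\<lambda>\<xi>. a * coord_decay (\<xi> - c))"
    by (intro integrable_mult_right integrable_coord_decay_shift)
  show "integrable lborel f"
    using bound borel_measurable_continuous_onI[OF cont]
    by (intro Bochner_Integration.integrable_bound[OF majorant]) (auto intro: order_trans[OF _ abs_ge_self])
  then have "(\<integral>\<xi>. norm (f \<xi>) \<partial>lborel) \<le> (\<integral>\<xi>. a * coord_decay (\<xi> - c) \<partial>lborel)"
    using majorant bound by (intro integral_mono integrable_norm)
  also have "\<dots> = a * integral\<^sup>L lborel (coord_decay :: 'a \<Rightarrow> real)"
    by (simp add: integral_coord_decay_shift)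
  finally show "(\<integral>\<xi>. norm (f \<xi>) \<partial>lborel) \<le> a * integral\<^sup>L lborel (coord_decay :: 'a \<Rightarrow> real)" .
qed

lemma inv_fourier_coordinate_moment_le:
  fixes \<phi> :: "'a::euclidean_space \<Rightarrow> complex"
  assumes b: "b \<in> Basis"
    and diff: "\<And>k z. dir_deriv_pow b k \<phi> differentiable at z"
    and decay: "\<And>k \<xi>. norm (dir_deriv_pow b k \<phi> \<xi>) \<le> a k / (1 + norm (\<xi> - c)) ^ (2 * DIM('a))"
  shows "(2 * pi * \<bar>x \<bullet> b\<bar>) ^ k * norm (inv_fourier \<phi> x)
           \<le> a k * integral\<^sup>L lborel (coord_decay :: 'a \<Rightarrow> real)"
proof -
  let ?n = "2 * DIM('a)"
  have a: "0 \<le> a k" for k using order_trans[OF norm_ge_zero decay[of k c]] by simp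
  have shifted: "norm (dir_deriv_pow b k \<phi> (\<xi> + s *\<^sub>R b)) \<le> 2 ^ ?n * a k * coord_decay (\<xi> - c)"
    if "\<bar>s\<bar> \<le> 1" for k \<xi> s
  proof -
    have "norm (dir_deriv_pow b k \<phi> (\<xi> + s *\<^sub>R b)) \<le> a k / (1 + norm (\<xi> + s *\<^sub>R b - c)) ^ ?n"
      by (rule decay)
    also have "\<dots> \<le> 2 ^ ?n * a k / (1 + norm (\<xi> - c)) ^ ?n"
      using that b a[of k] by (intro inverse_power_shift_le) auto
    also have "\<dots> \<le> 2 ^ ?n * a k * coord_decay (\<xi> - c)"
      using mult_left_mono[OF inverse_power_le_coord_decay[of "\<xi> - c"], of "2 ^ ?n * a k"] a[of k]
      by simp
    finally show ?thesis .
  qed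
  have "(2 * pi * \<bar>x \<bullet> b\<bar>) ^ k * norm (inv_fourier \<phi> x) = norm (inv_fourier (dir_deriv_pow b k \<phi>) x)"
  proof (rule norm_inv_fourier_dir_deriv_pow[OF diff, symmetric])
    fix j
    show "\<exists>w. integrable lborel w \<and>
            (\<forall>\<xi> s. \<bar>s\<bar> \<le> 1 \<longrightarrow> norm (dir_deriv_pow b j \<phi> (\<xi> + s *\<^sub>R b)) \<le> w \<xi>)"
    proof (intro exI[of _ "\<lambda>\<xi>. 2 ^ ?n * a j * coord_decay (\<xi> - c)"] conjI allI impI)
      show "integrable lborel (\<lambda>\<xi>. 2 ^ ?n * a j * coord_decay (\<xi> - c))"
        by (intro integrable_mult_right integrable_coord_decay_shift)
      fix \<xi> :: 'a and s :: real
      assume "\<bar>s\<bar> \<le> 1"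
      then show "norm (dir_deriv_pow b j \<phi> (\<xi> + s *\<^sub>R b)) \<le> 2 ^ ?n * a j * coord_decay (\<xi> - c)"
        by (rule shifted)
    qed
  qed
  also have "\<dots> \<le> (\<integral>\<xi>. norm (dir_deriv_pow b k \<phi> \<xi>) \<partial>lborel)"
    by (rule norm_inv_fourier_le)
  also have "\<dots> \<le> a k * integral\<^sup>L lborel (coord_decay :: 'a \<Rightarrow> real)"
    using diff
    by (intro integral_norm_le_coord_decay(2)[OF _ decay[of k]] differentiable_imp_continuous_on
              differentiable_at_imp_differentiable_on) auto
  finally show ?thesis .
qed

section \<open>The estimate for products of partition functions\<close>

lemma exists_Basis_norm_le:
  fixes x :: "'a::euclidean_space"
  obtains b where "b \<in> Basis" "norm x \<le> real DIM('a) * \<bar>x \<bullet> b\<bar>"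
proof -
  have "Max ((\<lambda>b. \<bar>x \<bullet> b\<bar>) ` Basis) \<in> (\<lambda>b. \<bar>x \<bullet> b\<bar>) ` (Basis :: 'a set)"
    by (intro Max_in) auto
  then obtain b where b: "Max ((\<lambda>b. \<bar>x \<bullet> b\<bar>) ` Basis) = \<bar>x \<bullet> b\<bar>" "b \<in> Basis"
    by (rule imageE)
  have "norm x \<le> (\<Sum>b'\<in>Basis. \<bar>x \<bullet> b'\<bar>)" by (rule norm_le_l1)
  also have "\<dots> \<le> (\<Sum>b'\<in>(Basis :: 'a set). \<bar>x \<bullet> b\<bar>)"
    unfolding b(1)[symmetric] by (intro sum_mono Max_ge) auto
  also have "\<dots> = real DIM('a) * \<bar>x \<bullet> b\<bar>" by simp
  finally show ?thesis using b(2) that by blast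
qed

lemma norm_dir_deriv_pow_le:
  assumes M: "weight_sequence M" and "0 < h" "b \<in> Basis" "0 < E"
    and bound: "\<And>bs. set bs \<subseteq> Basis \<Longrightarrow> h ^ length bs * norm (iter_deriv bs F \<xi>) * E / M (length bs) \<le> C"
  shows "norm (dir_deriv_pow b k F \<xi>) \<le> C * M k / h ^ k * (1 / E)"
proof -
  have "set (replicate k b) \<subseteq> Basis" using \<open>b \<in> Basis\<close> by auto
  from bound[OF this] have "h ^ k * norm (dir_deriv_pow b k F \<xi>) * E / M k \<le> C" by simp
  then have "h ^ k * norm (dir_deriv_pow b k F \<xi>) * E \<le> C * M k"
    using weight_sequence_pos[OF M, of k] by (simp add: pos_divide_le_eq)
  then show ?thesis using \<open>0 < h\<close> \<open>0 < E\<close> by (simp add: field_simps)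
qed

lemma norm_dir_deriv_pow_product_le:
  fixes F G :: "'a::euclidean_space \<Rightarrow> complex"
  assumes A: "weight_sequence A" and M: "weight_sequence M"
    and H: "1 \<le> H" and A_M2: "\<And>p q. A (p + q) \<le> c0 * H ^ (p + q) * A p * A q"
    and h: "0 < h" and hh': "2 * H * h \<le> h'"
    and poly: "\<And>r. 0 \<le> r \<Longrightarrow> (1 + r) ^ (2 * DIM('a)) \<le> cP * exp (assoc_fun A (2 * h * r))"
    and dF: "\<And>k z. dir_deriv_pow b k F differentiable at z"
    and dG: "\<And>k z. dir_deriv_pow b k G differentiable at z"
    and bF: "\<And>i \<xi>. norm (dir_deriv_pow b i F \<xi>) \<le> C * M i / h' ^ i * (1 / exp (assoc_fun A (h' * norm (\<xi> - p))))"
    and bG: "\<And>i \<xi>. norm (dir_deriv_pow b i G \<xi>) \<le> C * M i / h' ^ i * (1 / exp (assoc_fun A (h' * norm (\<xi> - q))))"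
  shows "norm (dir_deriv_pow b k (\<lambda>\<xi>. F \<xi> * G \<xi>) \<xi>)
           \<le> C\<^sup>2 * (2 / h') ^ k * M k * (c0 * cP * exp (- assoc_fun A (h * norm (p - q))))
               / (1 + norm (\<xi> - p)) ^ (2 * DIM('a))"
proof -
  let ?E = "\<lambda>\<rho>. exp (assoc_fun A \<rho>)"
  have "0 < 2 * H * h" using H h by simp
  with hh' have h': "0 < h'" by linarith
  have "norm (p - q) \<le> norm (\<xi> - p) + norm (\<xi> - q)"
    using norm_triangle_ineq[of "p - \<xi>" "\<xi> - q"] by (simp add: norm_minus_commute)
  then have separation: "1 / ?E (h' * norm (\<xi> - p)) * (1 / ?E (h' * norm (\<xi> - q)))
      \<le> c0 * cP * exp (- assoc_fun A (h * norm (p - q))) / (1 + norm (\<xi> - p)) ^ (2 * DIM('a))"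
    by (intro inverse_exp_assoc_fun_product_le[OF A H A_M2 h hh' poly]) auto
  have "norm (dir_deriv_pow b k (\<lambda>\<xi>. F \<xi> * G \<xi>) \<xi>)
        \<le> C * C * (2 / h') ^ k * M k * (1 / ?E (h' * norm (\<xi> - p)) * (1 / ?E (h' * norm (\<xi> - q))))"
    by (rule norm_dir_deriv_pow_mult_le[OF M h' dF dG bF bG])
  also have "\<dots> \<le> C * C * (2 / h') ^ k * M k
                   * (c0 * cP * exp (- assoc_fun A (h * norm (p - q))) / (1 + norm (\<xi> - p)) ^ (2 * DIM('a)))"
    using separation weight_sequence_pos[OF M, of k] h' by (intro mult_left_mono) auto
  finally show ?thesis by (simp add: power2_eq_square)
qed

lemma inv_fourier_product_moment_le:
  fixes F G :: "'a::euclidean_space \<Rightarrow> complex"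
  assumes A: "weight_sequence A" and M: "weight_sequence M"
    and H: "1 \<le> H" and A_M2: "\<And>p q. A (p + q) \<le> c0 * H ^ (p + q) * A p * A q"
    and h: "0 < h" and hh': "2 * H * h \<le> h'"
    and poly: "\<And>r. 0 \<le> r \<Longrightarrow> (1 + r) ^ (2 * DIM('a)) \<le> cP * exp (assoc_fun A (2 * h * r))"
    and F: "smooth_fun F" and G: "smooth_fun G"
    and bF: "\<And>bs \<xi>. set bs \<subseteq> Basis \<Longrightarrow>
               h' ^ length bs * norm (iter_deriv bs F \<xi>) * exp (assoc_fun A (h' * norm (\<xi> - p))) / M (length bs) \<le> C"
    and bG: "\<And>bs \<xi>. set bs \<subseteq> Basis \<Longrightarrow>
               h' ^ length bs * norm (iter_deriv bs G \<xi>) * exp (assoc_fun A (h' * norm (\<xi> - q))) / M (length bs) \<le> C"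
  shows "(pi * h' / DIM('a) * norm x) ^ k * norm (inv_fourier (\<lambda>\<xi>. F \<xi> * G \<xi>) x)
           \<le> (C\<^sup>2 * c0 * cP * integral\<^sup>L lborel (coord_decay :: 'a \<Rightarrow> real)
               * exp (- assoc_fun A (h * norm (p - q)))) * M k"
proof -
  let ?n = "DIM('a)" and ?I = "integral\<^sup>L lborel (coord_decay :: 'a \<Rightarrow> real)"
  define e where "e = exp (- assoc_fun A (h * norm (p - q)))"
  define a where "a = (\<lambda>k. C\<^sup>2 * (2 / h') ^ k * M k * (c0 * cP * e))"
  have "0 < 2 * H * h" using H h by simp
  with hh' have h': "0 < h'" by linarith
  obtain b where b: "b \<in> Basis" "norm x \<le> real ?n * \<bar>x \<bullet> b\<bar>" by (rule exists_Basis_norm_le)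
  have dF: "\<And>k z. dir_deriv_pow b k F differentiable at z"
    and dG: "\<And>k z. dir_deriv_pow b k G differentiable at z"
    using F G b(1) by (auto intro: smooth_fun_dir_deriv_pow_differentiable)
  have "norm (dir_deriv_pow b k (\<lambda>\<xi>. F \<xi> * G \<xi>) \<xi>) \<le> a k / (1 + norm (\<xi> - p)) ^ (2 * ?n)" for k \<xi>
    unfolding a_def e_def using h' b(1)
    by (intro norm_dir_deriv_pow_product_le[OF A M H A_M2 h hh' poly dF dG]
              norm_dir_deriv_pow_le[OF M] bF bG) auto
  from inv_fourier_coordinate_moment_le[OF b(1) dir_deriv_pow_mult_differentiable[OF dF dG] this]
  have moment: "(2 * pi * \<bar>x \<bullet> b\<bar>) ^ k * norm (inv_fourier (\<lambda>\<xi>. F \<xi> * G \<xi>) x) \<le> a k * ?I" .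
  have "pi * h' / ?n * norm x \<le> pi * h' / ?n * (?n * \<bar>x \<bullet> b\<bar>)"
    using b(2) h' by (intro mult_left_mono) auto
  also have "\<dots> = h' / 2 * (2 * pi * \<bar>x \<bullet> b\<bar>)" by simp
  finally have "(pi * h' / ?n * norm x) ^ k \<le> (h' / 2) ^ k * (2 * pi * \<bar>x \<bullet> b\<bar>) ^ k"
    unfolding power_mult_distrib[symmetric] using h' by (intro power_mono) auto
  from mult_right_mono[OF this norm_ge_zero]
  have "(pi * h' / ?n * norm x) ^ k * norm (inv_fourier (\<lambda>\<xi>. F \<xi> * G \<xi>) x)
        \<le> (h' / 2) ^ k * ((2 * pi * \<bar>x \<bullet> b\<bar>) ^ k * norm (inv_fourier (\<lambda>\<xi>. F \<xi> * G \<xi>) x))"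
    by (simp only: mult.assoc)
  also have "\<dots> \<le> (h' / 2) ^ k * (a k * ?I)"
    using moment h' by (intro mult_left_mono) auto
  also have "\<dots> = ((h' / 2) ^ k * (2 / h') ^ k) * ((C\<^sup>2 * c0 * cP * ?I * e) * M k)"
    unfolding a_def by (simp only: mult_ac)
  also have "\<dots> = (C\<^sup>2 * c0 * cP * ?I * e) * M k"
    using h' by (simp add: power_mult_distrib[symmetric])
  finally show ?thesis unfolding e_def .
qed

lemma weighted_le_coord_decay_of_moments:
  fixes x :: "'a::euclidean_space"
  assumes M: "weight_sequence M" and H: "1 \<le> H"
    and M_M2: "\<And>p q. M (p + q) \<le> c0 * H ^ (p + q) * M p * M q"
    and \<rho>: "0 < \<rho>" "0 \<le> \<tau>" "\<tau> * H \<le> \<rho>" and "0 \<le> C\<eta>" "0 \<le> N"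
    and \<eta>: "\<eta> \<le> C\<eta> * exp (assoc_fun M (\<tau> * norm x))"
    and moments: "\<And>k. (\<rho> * norm x) ^ k * N \<le> K * M k"
  shows "\<eta> * N \<le> C\<eta> * (2 ^ (2 * DIM('a)) * (1 + c0 * (H / \<rho>) ^ (2 * DIM('a)) * M (2 * DIM('a))) * K)
                     * coord_decay x"
proof -
  let ?m = "2 * DIM('a)" and ?E = "exp (assoc_fun M (\<tau> * norm x))"
  define cM where "cM = 2 ^ ?m * (1 + c0 * (H / \<rho>) ^ ?m * M ?m)"
  have M0: "M 0 = 1" using weight_sequence_0[OF M] .
  have "0 \<le> K" using \<open>0 \<le> N\<close> moments[of 0] M0 by simp
  moreover have "1 \<le> c0" using M_M2[of 0 0] M0 by simp
  ultimately have cMK: "0 \<le> cM * K"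
    unfolding cM_def using \<rho> H weight_sequence_pos[OF M, of ?m] by simp
  have "?E * (N * (1 + norm x) ^ ?m) \<le> cM * K"
    unfolding cM_def by (rule exp_assoc_fun_mult_le_of_moments[OF M H M_M2 \<rho> norm_ge_zero \<open>0 \<le> N\<close> moments])
  then have "?E * N \<le> cM * K / (1 + norm x) ^ ?m"
    by (simp add: pos_le_divide_eq add_pos_nonneg mult.assoc)
  also have "\<dots> = cM * K * (1 / (1 + norm x) ^ ?m)" by simp
  also have "\<dots> \<le> cM * K * coord_decay x"
    using cMK by (intro mult_left_mono inverse_power_le_coord_decay)
  finally have EN: "?E * N \<le> cM * K * coord_decay x" .
  have "\<eta> * N \<le> C\<eta> * ?E * N"
    using \<eta> \<open>0 \<le> N\<close> by (rule mult_right_mono)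
  also have "\<dots> \<le> C\<eta> * (cM * K * coord_decay x)"
    using mult_left_mono[OF EN \<open>0 \<le> C\<eta>\<close>] by (simp only: mult.assoc)
  finally show ?thesis unfolding cM_def by (simp only: mult.assoc)
qed

lemma nn_integral_weighted_le_of_moments:
  fixes f :: "'a::euclidean_space \<Rightarrow> complex" and \<eta> :: "'a \<Rightarrow> real"
  assumes M: "weight_sequence M" and H: "1 \<le> H"
    and M_M2: "\<And>p q. M (p + q) \<le> c0 * H ^ (p + q) * M p * M q"
    and \<rho>: "0 < \<rho>" "0 \<le> \<tau>" "\<tau> * H \<le> \<rho>" and C\<eta>: "0 \<le> C\<eta>"
    and \<eta>: "\<And>x. \<eta> x \<le> C\<eta> * exp (assoc_fun M (\<tau> * norm x))"
    and moments: "\<And>k x. (\<rho> * norm x) ^ k * norm (f x) \<le> K * M k"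
  shows "(\<integral>\<^sup>+x. ennreal (\<eta> x * norm (f x)) \<partial>lborel)
           \<le> ennreal (C\<eta> * (2 ^ (2 * DIM('a)) * (1 + c0 * (H / \<rho>) ^ (2 * DIM('a)) * M (2 * DIM('a))) * K))
             * (\<integral>\<^sup>+x. ennreal (coord_decay x) \<partial>(lborel :: 'a measure))"
    (is "_ \<le> ennreal ?B * _")
proof -
  have pointwise: "\<eta> x * norm (f x) \<le> ?B * coord_decay x" for x
    by (rule weighted_le_coord_decay_of_moments[OF M H M_M2 \<rho> C\<eta> norm_ge_zero \<eta> moments])
  have "(\<integral>\<^sup>+x. ennreal (\<eta> x * norm (f x)) \<partial>lborel)
        \<le> (\<integral>\<^sup>+x. ennreal ?B * ennreal (coord_decay x) \<partial>(lborel :: 'a measure))"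
  proof (rule nn_integral_mono)
    fix x :: 'a
    show "ennreal (\<eta> x * norm (f x)) \<le> ennreal ?B * ennreal (coord_decay x)"
      using pointwise[of x] coord_decay_pos[of x]
      by (simp add: ennreal_leI ennreal_mult'[symmetric] mult.commute)
  qed
  also have "\<dots> = ennreal ?B * (\<integral>\<^sup>+x. ennreal (coord_decay x) \<partial>(lborel :: 'a measure))"
  proof (rule nn_integral_cmult)
    have "coord_decay \<in> borel_measurable (borel :: 'a measure)"
      by (rule borel_measurable_continuous_onI[OF continuous_on_coord_decay])
    then show "(\<lambda>x. ennreal (coord_decay x)) \<in> borel_measurable (lborel :: 'a measure)"
      by measurable
  qed
  finally show ?thesis .
qed

lemma SUP_FL1_norm_product_lt_top:
  fixes \<psi> :: "'i \<Rightarrow> 'a::euclidean_space \<Rightarrow> complex" and y :: "'i \<Rightarrow> 'a" and \<eta> :: "'a \<Rightarrow> real"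
  assumes A: "weight_sequence A" and M: "weight_sequence M"
    and HA: "1 \<le> HA" and A_M2: "\<And>p q. A (p + q) \<le> c0A * HA ^ (p + q) * A p * A q"
    and HM: "1 \<le> HM" and M_M2: "\<And>p q. M (p + q) \<le> c0M * HM ^ (p + q) * M p * M q"
    and h: "0 < h" and hh': "2 * HA * h \<le> h'" and \<tau>: "0 \<le> \<tau>" "\<tau> * HM * DIM('a) \<le> pi * h'"
    and smooth: "\<And>l. smooth_fun (\<psi> l)"
    and bound: "\<And>l bs x. set bs \<subseteq> Basis \<Longrightarrow>
                  h' ^ length bs * norm (iter_deriv bs (\<psi> l) x) * exp (assoc_fun A (h' * norm (x - y l)))
                    / M (length bs) \<le> C"
    and "0 \<le> C\<eta>" and \<eta>: "\<And>x. \<eta> x \<le> C\<eta> * exp (assoc_fun M (\<tau> * norm x))"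
  shows "(SUP (l, m) \<in> UNIV. ennreal (exp (assoc_fun A (h * norm (y l - y m))))
                              * FL1_norm \<eta> (\<lambda>x. \<psi> l x * \<psi> m x)) < \<infinity>"
proof -
  let ?n = "DIM('a)" and ?I = "\<integral>\<^sup>+x. ennreal (coord_decay x) \<partial>(lborel :: 'a measure)"
  obtain cP where cP: "\<And>r. 0 \<le> r \<Longrightarrow> (1 + r) ^ (2 * ?n) \<le> cP * exp (assoc_fun A (2 * h * r))"
    using poly_le_exp_assoc_fun[OF A, of "2 * h" "2 * ?n"] h by auto
  define \<rho> where "\<rho> = pi * h' / ?n"
  define K where "K = C\<^sup>2 * c0A * cP * integral\<^sup>L lborel (coord_decay :: 'a \<Rightarrow> real)"
  define B where "B = C\<eta> * (2 ^ (2 * ?n) * (1 + c0M * (HM / \<rho>) ^ (2 * ?n) * M (2 * ?n)) * K)"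
  have "0 < 2 * HA * h" using HA h by simp
  with hh' have "0 < h'" by linarith
  then have \<rho>: "0 < \<rho>" "\<tau> * HM \<le> \<rho>"
    unfolding \<rho>_def using \<tau> by (auto simp: field_simps)
  have each: "ennreal (exp (assoc_fun A (h * norm (y l - y m)))) * FL1_norm \<eta> (\<lambda>x. \<psi> l x * \<psi> m x)
                \<le> ennreal B * ?I" for l m
  proof -
    let ?E = "exp (assoc_fun A (h * norm (y l - y m)))"
    define e where "e = exp (- assoc_fun A (h * norm (y l - y m)))"
    have "(\<rho> * norm x) ^ k * norm (inv_fourier (\<lambda>\<xi>. \<psi> l \<xi> * \<psi> m \<xi>) x) \<le> (K * e) * M k" for k x
      using inv_fourier_product_moment_le[OF A M HA A_M2 h hh' cP smooth smooth bound bound]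
      unfolding \<rho>_def K_def e_def by simp
    from nn_integral_weighted_le_of_moments[OF M HM M_M2 \<rho>(1) \<tau>(1) \<rho>(2) \<open>0 \<le> C\<eta>\<close> \<eta> this]
    have "FL1_norm \<eta> (\<lambda>x. \<psi> l x * \<psi> m x) \<le> ennreal (B * e) * ?I"
      unfolding FL1_norm_def B_def by (simp add: mult_ac)
    then have "ennreal ?E * FL1_norm \<eta> (\<lambda>x. \<psi> l x * \<psi> m x) \<le> ennreal ?E * (ennreal (B * e) * ?I)"
      by (rule mult_left_mono) simp
    also have "\<dots> = ennreal (?E * (B * e)) * ?I"
      by (simp add: ennreal_mult' mult.assoc)
    also have "?E * (B * e) = B"
      unfolding e_def by (simp add: exp_minus)
    finally show ?thesis .
  qed
  have "(SUP (l, m) \<in> UNIV. ennreal (exp (assoc_fun A (h * norm (y l - y m))))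
                              * FL1_norm \<eta> (\<lambda>x. \<psi> l x * \<psi> m x)) \<le> ennreal B * ?I"
    using each by (intro SUP_least) auto
  also have "\<dots> < \<infinity>"
    using nn_integral_coord_decay_lt_top[where 'a = 'a] by (simp add: ennreal_mult_less_top)
  finally show ?thesis .
qed

lemma UCPU_smooth_fun: "UCPU c M A \<psi> y \<Longrightarrow> smooth_fun (\<psi> l)"
  unfolding UCPU_def in_S_def by auto

lemma SUP_FL1_norm_product_lt_top_Beurling:
  fixes \<psi> :: "'i::countable \<Rightarrow> 'a::euclidean_space \<Rightarrow> complex" and y :: "'i \<Rightarrow> 'a" and \<eta> :: "'a \<Rightarrow> real"
  assumes A: "weight_sequence A" and M: "weight_sequence M"
    and \<eta>: "weight_of_class Beurling M \<eta>" and \<psi>: "UCPU Beurling M A \<psi> y" and h: "0 < h"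
  shows "(SUP (l, m) \<in> UNIV. ennreal (exp (assoc_fun A (h * norm (y l - y m))))
                              * FL1_norm \<eta> (\<lambda>x. \<psi> l x * \<psi> m x)) < \<infinity>"
proof -
  obtain c0A HA where HA: "1 \<le> HA" and A_M2: "\<And>p q. A (p + q) \<le> c0A * HA ^ (p + q) * A p * A q"
    using weight_sequence_M2[OF A] by metis
  obtain c0M HM where HM: "1 \<le> HM" and M_M2: "\<And>p q. M (p + q) \<le> c0M * HM ^ (p + q) * M p * M q"
    using weight_sequence_M2[OF M] by metis
  obtain C\<eta> \<tau> where "0 < C\<eta>" "0 < \<tau>" and \<eta>_le: "\<And>x z. \<eta> (x + z) \<le> C\<eta> * \<eta> x * exp (assoc_fun M (\<tau> * norm z))"
    using \<eta> unfolding weight_of_class_def by auto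
  have "0 < \<eta> 0" using \<eta> unfolding weight_of_class_def by auto
  define h' where "h' = max (2 * HA * h) (\<tau> * HM * DIM('a) / pi)"
  have "\<tau> * HM * DIM('a) = pi * (\<tau> * HM * DIM('a) / pi)" by simp
  also have "\<dots> \<le> pi * h'" unfolding h'_def by (intro mult_left_mono) auto
  finally have \<tau>h': "\<tau> * HM * DIM('a) \<le> pi * h'" .
  have "0 < h'" unfolding h'_def using HA h by (simp add: less_max_iff_disj)
  with \<psi> have "\<exists>C. \<forall>l bs x. set bs \<subseteq> Basis \<longrightarrow>
      h' ^ length bs * norm (iter_deriv bs (\<psi> l) x) * exp (assoc_fun A (h' * norm (x - y l))) / M (length bs) \<le> C"
    unfolding UCPU_def Let_def by auto
  then obtain C where bound: "\<And>l bs x. set bs \<subseteq> Basis \<Longrightarrow>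
      h' ^ length bs * norm (iter_deriv bs (\<psi> l) x) * exp (assoc_fun A (h' * norm (x - y l))) / M (length bs) \<le> C"
    by blast
  show ?thesis
    using \<eta>_le[of 0] \<open>0 < C\<eta>\<close> \<open>0 < \<eta> 0\<close> \<open>0 < \<tau>\<close> \<tau>h'
    by (intro SUP_FL1_norm_product_lt_top[OF A M HA A_M2 HM M_M2 h _ _ _ UCPU_smooth_fun[OF \<psi>] bound,
                                          where C\<eta> = "C\<eta> * \<eta> 0" and \<tau> = \<tau>])
       (auto simp: h'_def)
qed

lemma SUP_FL1_norm_product_lt_top_Roumieu:
  fixes \<psi> :: "'i::countable \<Rightarrow> 'a::euclidean_space \<Rightarrow> complex" and y :: "'i \<Rightarrow> 'a" and \<eta> :: "'a \<Rightarrow> real"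
  assumes A: "weight_sequence A" and M: "weight_sequence M"
    and \<eta>: "weight_of_class Roumieu M \<eta>" and \<psi>: "UCPU Roumieu M A \<psi> y"
  shows "\<exists>h>0. (SUP (l, m) \<in> UNIV. ennreal (exp (assoc_fun A (h * norm (y l - y m))))
                                    * FL1_norm \<eta> (\<lambda>x. \<psi> l x * \<psi> m x)) < \<infinity>"
proof -
  obtain c0A HA where HA: "1 \<le> HA" and A_M2: "\<And>p q. A (p + q) \<le> c0A * HA ^ (p + q) * A p * A q"
    using weight_sequence_M2[OF A] by metis
  obtain c0M HM where HM: "1 \<le> HM" and M_M2: "\<And>p q. M (p + q) \<le> c0M * HM ^ (p + q) * M p * M q"
    using weight_sequence_M2[OF M] by metis
  obtain h' where "0 < h'" and "\<exists>C. \<forall>l bs x. set bs \<subseteq> Basis \<longrightarrow>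
      h' ^ length bs * norm (iter_deriv bs (\<psi> l) x) * exp (assoc_fun A (h' * norm (x - y l))) / M (length bs) \<le> C"
    using \<psi> unfolding UCPU_def Let_def by auto
  then obtain C where bound: "\<And>l bs x. set bs \<subseteq> Basis \<Longrightarrow>
      h' ^ length bs * norm (iter_deriv bs (\<psi> l) x) * exp (assoc_fun A (h' * norm (x - y l))) / M (length bs) \<le> C"
    by blast
  define \<tau> where "\<tau> = pi * h' / (HM * DIM('a))"
  have "0 < \<tau>" unfolding \<tau>_def using \<open>0 < h'\<close> HM by simp
  then obtain C\<eta> where "0 < C\<eta>" and \<eta>_le: "\<And>x z. \<eta> (x + z) \<le> C\<eta> * \<eta> x * exp (assoc_fun M (\<tau> * norm z))"
    using \<eta> unfolding weight_of_class_def by auto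
  have "0 < \<eta> 0" using \<eta> unfolding weight_of_class_def by auto
  have "0 < h' / (2 * HA)" using \<open>0 < h'\<close> HA by simp
  moreover have "(SUP (l, m) \<in> UNIV. ennreal (exp (assoc_fun A (h' / (2 * HA) * norm (y l - y m))))
                                     * FL1_norm \<eta> (\<lambda>x. \<psi> l x * \<psi> m x)) < \<infinity>"
    using \<eta>_le[of 0] \<open>0 < C\<eta>\<close> \<open>0 < \<eta> 0\<close> \<open>0 < \<tau>\<close> HM HA
    by (intro SUP_FL1_norm_product_lt_top[OF A M HA A_M2 HM M_M2 \<open>0 < h' / (2 * HA)\<close> _ _ _
                                             UCPU_smooth_fun[OF \<psi>] bound, where C\<eta> = "C\<eta> * \<eta> 0" and \<tau> = \<tau>])
       (auto simp: \<tau>_def)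
  ultimately show ?thesis by blast
qed

theorem lemma3p8:
  fixes c :: ultra_case
    and M A :: "nat \<Rightarrow> real"
    and \<eta> :: "'a::euclidean_space \<Rightarrow> real"
    and \<psi> :: "'i::countable \<Rightarrow> 'a \<Rightarrow> complex"
    and y :: "'i \<Rightarrow> 'a"
  assumes "weight_sequence M" and "weight_sequence A" and "cond_M2_star A"
    and "weight_of_class c M \<eta>"
    and "UCPU c M A \<psi> y"
  shows "let bnd = (\<lambda>h. (SUP (l, m) \<in> UNIV.
                 ennreal (exp (assoc_fun A (h * norm (y l - y m)))) * FL1_norm \<eta> (\<lambda>x. \<psi> l x * \<psi> m x)) < \<infinity>)
         in case c of Beurling \<Rightarrow> (\<forall>h>0. bnd h) | Roumieu \<Rightarrow> (\<exists>h>0. bnd h)"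
proof (cases c)
  case Beurling
  show ?thesis unfolding Let_def Beurling ultra_case.case
    using SUP_FL1_norm_product_lt_top_Beurling[OF assms(2,1) assms(4,5)[unfolded Beurling]] by blast
next
  case Roumieu
  show ?thesis unfolding Let_def Roumieu ultra_case.case
    by (rule SUP_FL1_norm_product_lt_top_Roumieu[OF assms(2,1) assms(4,5)[unfolded Roumieu]])
qed

end
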